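(* Let $G$ be a connected graph with at least one edge. Then $B(G)$ diverges under the operator $KB_e$ if and only if $G$ is not a cycle, not a path and not $K_{1,3}$.
   Context: All graphs are finite, simple and undirected. A biclique of a graph $H$ is a maximal (with respect to inclusion) induced subgraph of $H$ that is a complete bipartite graph $K_{p,q}$ with $p,q\ge 1$; $KB_e(H)$ has one vertex per biclique of $H$, two distinct vertices adjacent iff the bicliques share an edge; if $H$ has no bicliques, $KB_e(H)$ is the empty graph. $KB_e^0(H)=H$, $KB_e^k(H)=KB_e(KB_e^{k-1}(H))$; $H$ diverges if $|V(KB_e^k(H))|\to\infty$. The burgeon graph $B(G)$ is obtained by replacing each vertex $v$ of $G$ by a clique $C_v$ on $d(v)$ vertices, whose vertices are in bijection with the neighbours of $v$; for each edge $uv$ of $G$, the vertex of $C_v$ corresponding to $u$ is joined to the vertex of $C_u$ corresponding to $v$; there are no other edges between different cliques. *)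

theory Defs
  imports Main "HOL-Library.Nat_Bijection"
begin

text \<open>Every finite graph is isomorphic to such a graph, and all notions below are
  invariant under isomorphism.\<close>

type_synonym ugraph = "nat set \<times> nat set set"

definition verts :: "ugraph \<Rightarrow> nat set" where "verts G = fst G"
definition edges :: "ugraph \<Rightarrow> nat set set" where "edges G = snd G"

definition wf_graph :: "ugraph \<Rightarrow> bool" where
  "wf_graph G \<longleftrightarrow> finite (verts G) \<and> (\<forall>e\<in>edges G. e \<subseteq> verts G \<and> card e = 2)"

definition adj :: "ugraph \<Rightarrow> nat \<Rightarrow> nat \<Rightarrow> bool" where
  "adj G u v \<longleftrightarrow> {u, v} \<in> edges G"

definition connected_graph :: "ugraph \<Rightarrow> bool" where
  "connected_graph G \<longleftrightarrow> (\<forall>u\<in>verts G. \<forall>v\<in>verts G. (adj G)\<^sup>*\<^sup>* u v)"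

definition induced_cbip :: "ugraph \<Rightarrow> nat set \<Rightarrow> bool" where
  "induced_cbip G S \<longleftrightarrow> S \<subseteq> verts G \<and>
     (\<exists>A B. A \<noteq> {} \<and> B \<noteq> {} \<and> A \<inter> B = {} \<and> A \<union> B = S \<and>
        (\<forall>a\<in>A. \<forall>b\<in>B. adj G a b) \<and>
        (\<forall>a\<in>A. \<forall>a'\<in>A. \<not> adj G a a') \<and>
        (\<forall>b\<in>B. \<forall>b'\<in>B. \<not> adj G b b'))"

text \<open>A biclique: an inclusion-maximal induced complete bipartite subgraph
  (an induced subgraph is determined by its vertex set).\<close>
definition biclique :: "ugraph \<Rightarrow> nat set \<Rightarrow> bool" where
  "biclique G S \<longleftrightarrow> induced_cbip G S \<and> (\<forall>T. induced_cbip G T \<and> S \<subseteq> T \<longrightarrow> T = S)"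

definition share_edge :: "ugraph \<Rightarrow> nat set \<Rightarrow> nat set \<Rightarrow> bool" where
  "share_edge G S T \<longleftrightarrow> (\<exists>u v. u \<in> S \<inter> T \<and> v \<in> S \<inter> T \<and> adj G u v)"

text \<open>Its vertex set is the set of bicliques,
  relabelled injectively into nat by set_encode (a bijection between finite
  sets of naturals and naturals).\<close>
definition KBe :: "ugraph \<Rightarrow> ugraph" where
  "KBe G = (set_encode ` {S. biclique G S},
            {{set_encode S, set_encode T} | S T.
               biclique G S \<and> biclique G T \<and> S \<noteq> T \<and> share_edge G S T})"

definition diverges :: "ugraph \<Rightarrow> bool" where
  "diverges H \<longleftrightarrow> filterlim (\<lambda>k. card (verts ((KBe ^^ k) H))) at_top sequentially"

text \<open>Burgeon graph B(G): vertex (v,u) (encoded by prod_encode) is the vertex of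
  the clique C_v corresponding to the neighbour u of v.\<close>
definition burgeon :: "ugraph \<Rightarrow> ugraph" where
  "burgeon G =
    ({prod_encode (v, u) | v u. v \<in> verts G \<and> adj G v u},
     {{prod_encode (v, u), prod_encode (v, w)} | v u w.
         v \<in> verts G \<and> adj G v u \<and> adj G v w \<and> u \<noteq> w}
     \<union> {{prod_encode (v, u), prod_encode (u, v)} | v u. v \<in> verts G \<and> adj G v u})"

definition is_path_graph :: "ugraph \<Rightarrow> bool" where
  "is_path_graph G \<longleftrightarrow> (\<exists>xs. distinct xs \<and> xs \<noteq> [] \<and> verts G = set xs \<and>
      edges G = {{xs ! i, xs ! (i + 1)} | i. i + 1 < length xs})"

definition is_cycle_graph :: "ugraph \<Rightarrow> bool" where
  "is_cycle_graph G \<longleftrightarrow> (\<exists>xs. distinct xs \<and> length xs \<ge> 3 \<and> verts G = set xs \<and>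
      edges G = {{xs ! i, xs ! ((i + 1) mod length xs)} | i. i < length xs})"

definition is_K13 :: "ugraph \<Rightarrow> bool" where
  "is_K13 G \<longleftrightarrow> (\<exists>c a b d. distinct [c, a, b, d] \<and> verts G = {c, a, b, d} \<and>
      edges G = {{c, a}, {c, b}, {c, d}})"

end

theory Submission
  imports Defs
begin

text \<open>If no component of G is a single edge, the bicliques of B(G) are exactly the
  induced paths (u,v) - (v,u) - (v,w) given by the 2-arcs u v w of G, and two of them share
  an edge precisely when the corresponding darts of the line graph L(G) are adjacent in
  B(L(G)). Hence KB_e(B(G)) is isomorphic to B(L(G)), and KB_e^k(B(G)) has as many
  vertices as L^k(G) has darts, while the iterated line graphs have no isolated edge.
  If d(x) + d(y) \<le> 4 for every edge xy (paths, cycles, K_{1,3}), then L(G) has maximum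
  degree 2; in such a graph every dart extends to at most one 2-arc, so the number of
  darts never grows again (and once an iterate is a single edge, KB_e collapses).
  Any other connected G has a vertex of degree 3 and, not being K_{1,3}, its line graph
  contains a paw. The line graph of a paw has minimum degree 2 and a vertex of degree 3,
  a property inherited by line graphs, and in such graphs 2-arcs strictly outnumber darts. Since L is monotone under taking subgraphs, the number of
  darts of L^k(G) grows at least linearly.\<close>

section \<open>Simple graphs\<close>

lemma adj_sym: "adj G u v = adj G v u"
  by (simp add: adj_def insert_commute)

lemma wf_adjD:
  assumes "wf_graph G" "adj G u v"
  shows "u \<noteq> v" "u \<in> verts G" "v \<in> verts G"
proof -
  have "{u,v} \<subseteq> verts G" "card {u,v} = 2"
    using assms unfolding wf_graph_def adj_def by auto
  thus "u \<noteq> v" "u \<in> verts G" "v \<in> verts G" by auto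
qed

lemma wf_finite: "wf_graph G \<Longrightarrow> finite (verts G)"
  by (simp add: wf_graph_def)

lemma finite_edges: "wf_graph G \<Longrightarrow> finite (edges G)"
  unfolding wf_graph_def by (metis Pow_iff finite_Pow_iff finite_subset subsetI)

lemma wf_edgeE:
  assumes "wf_graph G" "e \<in> edges G"
  obtains x y where "e = {x,y}" "adj G x y" "x \<noteq> y"
proof -
  have "card e = 2" using assms unfolding wf_graph_def by blast
  then obtain x y where "e = {x,y}" "x \<noteq> y" by (meson card_2_iff)
  thus ?thesis using that assms(2) by (simp add: adj_def)
qed

lemma wf_edge_containsE:
  assumes "wf_graph G" "e \<in> edges G" "v \<in> e"
  obtains u where "e = {v,u}" "adj G v u"
  using wf_edgeE[OF assms(1,2)] assms(3) by (metis adj_sym empty_iff insertE insert_commute)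

lemma finite_edge: "wf_graph G \<Longrightarrow> e \<in> edges G \<Longrightarrow> finite e"
  by (metis finite.emptyI finite.insertI wf_edgeE)

definition nbrs :: "ugraph \<Rightarrow> nat \<Rightarrow> nat set" where
  "nbrs G v = {u. adj G v u}"

lemma finite_nbrs: "wf_graph G \<Longrightarrow> finite (nbrs G v)"
  by (rule finite_subset[of _ "verts G"]) (auto simp: nbrs_def dest: wf_adjD wf_finite)

lemma card_nbrs_pos: "wf_graph G \<Longrightarrow> adj G x y \<Longrightarrow> 1 \<le> card (nbrs G x)"
  by (metis One_nat_def Suc_leI card_gt_0_iff empty_iff finite_nbrs mem_Collect_eq nbrs_def)

lemma card_nbrs_ge_3E:
  assumes "3 \<le> card (nbrs G v)"
  obtains a b c where "adj G v a" "adj G v b" "adj G v c" "distinct [a,b,c]"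
proof -
  obtain A where A: "A \<subseteq> nbrs G v" "card A = 3"
    using obtain_subset_with_card_n[OF assms] by blast
  then obtain a b c where "A = {a,b,c}" "distinct [a,b,c]"
    by (auto simp: card_3_iff)
  moreover from this A(1) have "a \<in> nbrs G v" "b \<in> nbrs G v" "c \<in> nbrs G v" by auto
  ultimately show ?thesis using that unfolding nbrs_def by blast
qed

lemma connected_closed_set:
  assumes "connected_graph G" "v \<in> verts G" "v \<in> X" "\<And>y z. y \<in> X \<Longrightarrow> adj G y z \<Longrightarrow> z \<in> X"
  shows "verts G \<subseteq> X"
proof
  fix x assume "x \<in> verts G"
  hence "(adj G)\<^sup>*\<^sup>* v x" using assms(1,2) connected_graph_def by blast
  thus "x \<in> X" by (induction rule: rtranclp_induct) (use assms(3,4) in blast)+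
qed

section \<open>Isomorphism and the edge-biclique operator\<close>

definition iso_map :: "(nat \<Rightarrow> nat) \<Rightarrow> ugraph \<Rightarrow> ugraph \<Rightarrow> bool" where
  "iso_map f H H' \<longleftrightarrow> bij_betw f (verts H) (verts H') \<and>
     (\<forall>x\<in>verts H. \<forall>y\<in>verts H. adj H' (f x) (f y) = adj H x y)"

definition isomorphic :: "ugraph \<Rightarrow> ugraph \<Rightarrow> bool" where
  "isomorphic H H' \<longleftrightarrow> (\<exists>f. iso_map f H H')"

lemma iso_map_inv_into:
  assumes "iso_map f H H'"
  shows "iso_map (inv_into (verts H) f) H' H"
proof -
  have b: "bij_betw f (verts H) (verts H')" using assms by (simp add: iso_map_def)
  let ?g = "inv_into (verts H) f"
  have "?g x \<in> verts H" "f (?g x) = x" if "x \<in> verts H'" for x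
    using b that by (auto simp: bij_betw_def f_inv_into_f inv_into_into)
  thus ?thesis using assms b unfolding iso_map_def by (metis bij_betw_inv_into)
qed

lemma isomorphic_refl: "isomorphic H H"
  unfolding isomorphic_def iso_map_def by (rule exI[of _ id]) auto

lemma isomorphic_trans:
  assumes "isomorphic H1 H2" "isomorphic H2 H3"
  shows "isomorphic H1 H3"
proof -
  obtain f g where f: "iso_map f H1 H2" and g: "iso_map g H2 H3"
    using assms isomorphic_def by blast
  have "f x \<in> verts H2" if "x \<in> verts H1" for x
    using f that unfolding iso_map_def bij_betw_def by auto
  moreover have "bij_betw (g \<circ> f) (verts H1) (verts H3)"
    using f g bij_betw_trans unfolding iso_map_def by blast
  ultimately have "iso_map (g \<circ> f) H1 H3"
    using f g unfolding iso_map_def by simp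
  thus ?thesis using isomorphic_def by blast
qed

lemma isomorphic_card_verts: "isomorphic H H' \<Longrightarrow> card (verts H) = card (verts H')"
  unfolding isomorphic_def iso_map_def by (metis bij_betw_same_card)

lemma isomorphic_reindex:
  assumes "verts H = \<alpha> ` T" "verts H' = \<beta> ` T" "inj_on \<alpha> T" "inj_on \<beta> T"
    "\<And>t t'. t \<in> T \<Longrightarrow> t' \<in> T \<Longrightarrow> adj H' (\<beta> t) (\<beta> t') = adj H (\<alpha> t) (\<alpha> t')"
  shows "isomorphic H H'"
proof -
  let ?f = "\<beta> \<circ> inv_into T \<alpha>"
  have "bij_betw (inv_into T \<alpha>) (\<alpha> ` T) T"
    using assms(3) by (simp add: bij_betw_inv_into inj_on_imp_bij_betw)
  moreover have "bij_betw \<beta> T (\<beta> ` T)" using assms(4) by (simp add: inj_on_imp_bij_betw)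
  ultimately have "bij_betw ?f (verts H) (verts H')"
    using assms(1,2) bij_betw_trans by metis
  moreover have "adj H' (?f x) (?f y) = adj H x y" if "x \<in> verts H" "y \<in> verts H" for x y
    using that assms(1,3,5) by auto
  ultimately show ?thesis unfolding isomorphic_def iso_map_def by blast
qed

lemma biclique_sub: "biclique G S \<Longrightarrow> S \<subseteq> verts G"
  by (simp add: biclique_def induced_cbip_def)

lemma biclique_finite: "wf_graph G \<Longrightarrow> biclique G S \<Longrightarrow> finite S"
  using biclique_sub wf_finite finite_subset by blast

lemma finite_bicliques: "wf_graph G \<Longrightarrow> finite {S. biclique G S}"
  by (rule finite_subset[of _ "Pow (verts G)"]) (auto dest: biclique_sub wf_finite)

lemma verts_KBe: "verts (KBe G) = set_encode ` {S. biclique G S}"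
  by (simp add: KBe_def verts_def)

lemma adj_KBe:
  assumes "wf_graph G" "biclique G S" "biclique G T"
  shows "adj (KBe G) (set_encode S) (set_encode T) \<longleftrightarrow> S \<noteq> T \<and> share_edge G S T"
proof
  assume "adj (KBe G) (set_encode S) (set_encode T)"
  then obtain S' T' where st: "{set_encode S, set_encode T} = {set_encode S', set_encode T'}"
    "biclique G S'" "biclique G T'" "S' \<noteq> T'" "share_edge G S' T'"
    unfolding adj_def KBe_def edges_def by auto
  have "finite S" "finite T" "finite S'" "finite T'"
    using st assms biclique_finite by blast+
  with st(1) have "(S = S' \<and> T = T') \<or> (S = T' \<and> T = S')"
    by (auto simp: doubleton_eq_iff set_encode_eq)
  thus "S \<noteq> T \<and> share_edge G S T" using st unfolding share_edge_def by blast
next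
  assume "S \<noteq> T \<and> share_edge G S T"
  thus "adj (KBe G) (set_encode S) (set_encode T)"
    using assms unfolding adj_def KBe_def edges_def by auto
qed

lemma wf_KBe: "wf_graph G \<Longrightarrow> wf_graph (KBe G)"
proof -
  assume wf: "wf_graph G"
  have "e \<subseteq> verts (KBe G) \<and> card e = 2" if e: "e \<in> edges (KBe G)" for e
  proof -
    obtain S T where st: "e = {set_encode S, set_encode T}" "biclique G S" "biclique G T" "S \<noteq> T"
      using e unfolding KBe_def edges_def by auto
    have "set_encode S \<noteq> set_encode T"
      using st wf biclique_finite set_encode_eq by metis
    thus ?thesis using st by (simp add: verts_KBe)
  qed
  thus ?thesis unfolding wf_graph_def using finite_bicliques[OF wf] by (simp add: verts_KBe)
qed

lemma wf_KBe_iter: "wf_graph G \<Longrightarrow> wf_graph ((KBe ^^ k) G)"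
  by (induction k) (auto simp: wf_KBe)

lemma induced_cbip_image:
  assumes f: "iso_map f H H'" and c: "induced_cbip H S"
  shows "induced_cbip H' (f ` S)"
proof -
  have inj: "inj_on f (verts H)" and fv: "f ` verts H = verts H'"
    and ad: "\<And>x y. x \<in> verts H \<Longrightarrow> y \<in> verts H \<Longrightarrow> adj H' (f x) (f y) = adj H x y"
    using f unfolding iso_map_def bij_betw_def by blast+
  obtain A B where AB: "S \<subseteq> verts H" "A \<noteq> {}" "B \<noteq> {}" "A \<inter> B = {}" "A \<union> B = S"
    "\<forall>a\<in>A. \<forall>b\<in>B. adj H a b" "\<forall>a\<in>A. \<forall>a'\<in>A. \<not> adj H a a'" "\<forall>b\<in>B. \<forall>b'\<in>B. \<not> adj H b b'"
    using c unfolding induced_cbip_def by blast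
  have sub: "A \<subseteq> verts H" "B \<subseteq> verts H" using AB(1,5) by auto
  have "f ` A \<inter> f ` B = {}" using inj_on_image_Int[OF inj sub] AB(4) by simp
  moreover have "\<forall>a\<in>f`A. \<forall>b\<in>f`B. adj H' a b" "\<forall>a\<in>f`A. \<forall>a'\<in>f`A. \<not> adj H' a a'"
    "\<forall>b\<in>f`B. \<forall>b'\<in>f`B. \<not> adj H' b b'"
    using AB(6-8) sub ad by (simp_all add: subset_iff)
  moreover have "f ` S \<subseteq> verts H'" using AB(1) fv by blast
  ultimately show ?thesis
    unfolding induced_cbip_def using AB(2,3,5) by (intro conjI exI[of _ "f ` A"] exI[of _ "f ` B"]) auto
qed

lemma biclique_image:
  assumes f: "iso_map f H H'" and c: "biclique H S"
  shows "biclique H' (f ` S)"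
  unfolding biclique_def
proof (intro conjI allI impI)
  show "induced_cbip H' (f ` S)" using induced_cbip_image[OF f] c biclique_def by blast
  let ?g = "inv_into (verts H) f"
  have b: "bij_betw f (verts H) (verts H')" using f by (simp add: iso_map_def)
  fix T assume T: "induced_cbip H' T \<and> f ` S \<subseteq> T"
  have "?g ` (f ` S) = S" using biclique_sub[OF c] b
    by (simp add: bij_betw_def inv_into_image_cancel)
  hence "?g ` T = S"
    using c T induced_cbip_image[OF iso_map_inv_into[OF f]] unfolding biclique_def
    by (metis image_mono)
  moreover have "f ` ?g ` T = T" using T b
    by (simp add: bij_betw_def image_inv_into_cancel induced_cbip_def)
  ultimately show "T = f ` S" by simp
qed

lemma bicliques_image:
  assumes f: "iso_map f H H'"
  shows "{S. biclique H' S} = (`) f ` {S. biclique H S}"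
proof (intro equalityI subsetI)
  fix S' assume S': "S' \<in> {S. biclique H' S}"
  have "f ` (inv_into (verts H) f ` S') = S'" using S' f biclique_sub
    by (simp add: iso_map_def bij_betw_def image_inv_into_cancel)
  thus "S' \<in> (`) f ` {S. biclique H S}"
    using S' biclique_image[OF iso_map_inv_into[OF f]] by (metis image_eqI mem_Collect_eq)
qed (use biclique_image f in blast)

lemma share_edge_image:
  assumes f: "iso_map f H H'" and sub: "S \<subseteq> verts H" "T \<subseteq> verts H"
  shows "share_edge H' (f ` S) (f ` T) = share_edge H S T"
proof -
  have inj: "inj_on f (verts H)" using f by (simp add: iso_map_def bij_betw_def)
  have ad: "\<And>x y. x \<in> verts H \<Longrightarrow> y \<in> verts H \<Longrightarrow> adj H' (f x) (f y) = adj H x y"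
    using f by (auto simp: iso_map_def)
  have int: "f ` S \<inter> f ` T = f ` (S \<inter> T)" using inj_on_image_Int[OF inj sub] by simp
  show ?thesis
  proof
    assume "share_edge H' (f ` S) (f ` T)"
    then obtain x y where "x \<in> S \<inter> T" "y \<in> S \<inter> T" "adj H' (f x) (f y)"
      unfolding share_edge_def int by blast
    thus "share_edge H S T" unfolding share_edge_def using ad sub by blast
  next
    assume "share_edge H S T"
    then obtain x y where "x \<in> S \<inter> T" "y \<in> S \<inter> T" "adj H x y"
      unfolding share_edge_def by blast
    thus "share_edge H' (f ` S) (f ` T)" unfolding share_edge_def using ad sub by blast
  qed
qed

lemma KBe_isomorphic:
  assumes wf: "wf_graph H" "wf_graph H'" and i: "isomorphic H H'"
  shows "isomorphic (KBe H) (KBe H')"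
proof -
  obtain f where f: "iso_map f H H'" using i isomorphic_def by blast
  let ?T = "{S. biclique H S}"
  have inj_img: "(f ` S = f ` T) = (S = T)" if "S \<in> ?T" "T \<in> ?T" for S T
    using that f biclique_sub inj_on_image_eq_iff
    by (metis bij_betw_def iso_map_def mem_Collect_eq)
  show ?thesis
  proof (rule isomorphic_reindex[where T = ?T and \<alpha> = set_encode and \<beta> = "\<lambda>S. set_encode (f ` S)"])
    show "verts (KBe H) = set_encode ` ?T" by (simp add: verts_KBe)
    show "verts (KBe H') = (\<lambda>S. set_encode (f ` S)) ` ?T"
      using bicliques_image[OF f] by (simp add: verts_KBe image_image)
    show "inj_on set_encode ?T" "inj_on (\<lambda>S. set_encode (f ` S)) ?T"
      using inj_img biclique_finite[OF wf(1)] by (auto intro!: inj_onI simp: set_encode_eq)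
    fix S T assume S: "S \<in> ?T" and T: "T \<in> ?T"
    thus "adj (KBe H') (set_encode (f ` S)) (set_encode (f ` T)) = adj (KBe H) (set_encode S) (set_encode T)"
      using adj_KBe[OF wf(2)] adj_KBe[OF wf(1), of S T] inj_img biclique_image[OF f]
        share_edge_image[OF f] biclique_sub by simp
  qed
qed

section \<open>The burgeon graph and its bicliques\<close>

text \<open>The vertex (v,u) of B(G), the vertex of C_v corresponding to u, is the dart of G
  from v to u.\<close>
definition darts :: "ugraph \<Rightarrow> (nat \<times> nat) set" where
  "darts G = {(v,u). adj G v u}"

definition dart_adj :: "'a \<times> 'a \<Rightarrow> 'a \<times> 'a \<Rightarrow> bool" where
  "dart_adj d d' \<longleftrightarrow> (fst d = fst d' \<and> snd d \<noteq> snd d') \<or> (fst d' = snd d \<and> snd d' = fst d)"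

lemma finite_darts: "wf_graph G \<Longrightarrow> finite (darts G)"
  by (rule finite_subset[of _ "verts G \<times> verts G"]) (auto simp: darts_def dest: wf_adjD wf_finite)

lemma darts_mono: "edges H \<subseteq> edges G \<Longrightarrow> darts H \<subseteq> darts G"
  unfolding darts_def adj_def by blast

lemma verts_burgeon: "wf_graph G \<Longrightarrow> verts (burgeon G) = prod_encode ` darts G"
  unfolding burgeon_def verts_def darts_def using wf_adjD[of G] by (auto simp: verts_def)

lemma card_verts_burgeon: "wf_graph G \<Longrightarrow> card (verts (burgeon G)) = card (darts G)"
  using verts_burgeon card_image inj_prod_encode by (metis inj_on_subset subset_UNIV)

lemma burgeon_vertE:
  assumes "wf_graph G" "x \<in> verts (burgeon G)"
  obtains v u where "x = prod_encode (v,u)" "adj G v u"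
  using assms verts_burgeon[OF assms(1)] unfolding darts_def by auto

lemma edges_burgeon: "edges (burgeon G) =
    {{prod_encode (v, u), prod_encode (v, w)} | v u w.
         v \<in> verts G \<and> adj G v u \<and> adj G v w \<and> u \<noteq> w}
     \<union> {{prod_encode (v, u), prod_encode (u, v)} | v u. v \<in> verts G \<and> adj G v u}"
  by (simp add: burgeon_def edges_def)

lemma adj_burgeon:
  assumes wf: "wf_graph G" and d: "adj G v u" "adj G v' u'"
  shows "adj (burgeon G) (prod_encode (v,u)) (prod_encode (v',u')) \<longleftrightarrow> dart_adj (v,u) (v',u')"
proof
  assume "adj (burgeon G) (prod_encode (v,u)) (prod_encode (v',u'))"
  hence "{prod_encode (v,u), prod_encode (v',u')} \<in> edges (burgeon G)" by (simp add: adj_def)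
  thus "dart_adj (v,u) (v',u')"
    unfolding edges_burgeon dart_adj_def by (auto simp: doubleton_eq_iff prod_encode_eq)
next
  assume "dart_adj (v,u) (v',u')"
  moreover have "v \<in> verts G" using wf d wf_adjD by blast
  ultimately have "{prod_encode (v,u), prod_encode (v',u')} \<in> edges (burgeon G)"
    unfolding edges_burgeon dart_adj_def using d by auto
  thus "adj (burgeon G) (prod_encode (v,u)) (prod_encode (v',u'))" by (simp add: adj_def)
qed

lemma wf_burgeon: "wf_graph G \<Longrightarrow> wf_graph (burgeon G)"
proof -
  assume wf: "wf_graph G"
  have "e \<subseteq> verts (burgeon G) \<and> card e = 2" if e: "e \<in> edges (burgeon G)" for e
  proof -
    from e consider (clique) v u w where "e = {prod_encode (v, u), prod_encode (v, w)}"
        "adj G v u" "adj G v w" "u \<noteq> w"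
      | (edge) v u where "e = {prod_encode (v, u), prod_encode (u, v)}" "adj G v u"
      unfolding edges_burgeon by blast
    thus ?thesis
    proof cases
      case clique thus ?thesis using verts_burgeon[OF wf] by (auto simp: darts_def prod_encode_eq)
    next
      case edge
      moreover have "u \<noteq> v" "adj G u v" using wf edge(2) wf_adjD adj_sym by metis+
      ultimately show ?thesis using verts_burgeon[OF wf] by (auto simp: darts_def prod_encode_eq)
    qed
  qed
  thus ?thesis using finite_darts[OF wf] verts_burgeon[OF wf] by (simp add: wf_graph_def)
qed

definition no_isolated_edge :: "ugraph \<Rightarrow> bool" where
  "no_isolated_edge G \<longleftrightarrow>
     (\<forall>v u. adj G v u \<longrightarrow> (\<exists>w. w \<noteq> u \<and> adj G v w) \<or> (\<exists>w. w \<noteq> v \<and> adj G u w))"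

definition two_arcs :: "ugraph \<Rightarrow> (nat \<times> nat \<times> nat) set" where
  "two_arcs G = {(u,v,w). adj G u v \<and> adj G v w \<and> u \<noteq> w}"

fun arc_darts :: "'a \<times> 'a \<times> 'a \<Rightarrow> ('a \<times> 'a) set" where
  "arc_darts (u,v,w) = {(u,v),(v,u),(v,w)}"

definition arc_biclique :: "nat \<times> nat \<times> nat \<Rightarrow> nat set" where
  "arc_biclique t = prod_encode ` arc_darts t"

lemma arc_biclique_eq:
  "arc_biclique (u,v,w) = {prod_encode (u,v), prod_encode (v,u), prod_encode (v,w)}"
  by (simp add: arc_biclique_def)

lemma two_arcsD:
  assumes "wf_graph G" "(u,v,w) \<in> two_arcs G"
  shows "adj G u v" "adj G v u" "adj G v w" "adj G w v" "u \<noteq> v" "v \<noteq> w" "u \<noteq> w"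
  using assms wf_adjD[OF assms(1)] adj_sym unfolding two_arcs_def by auto

lemma finite_two_arcs: "wf_graph G \<Longrightarrow> finite (two_arcs G)"
  by (rule finite_subset[of _ "verts G \<times> verts G \<times> verts G"])
    (auto simp: two_arcs_def dest: wf_adjD wf_finite)

text \<open>Distinct cliques C_v of B(G) are joined by at most one edge, so two nonadjacent
  vertices have at most one common neighbour.\<close>
lemma burgeon_no_K22:
  assumes wf: "wf_graph G" and v: "a \<in> verts (burgeon G)" "a' \<in> verts (burgeon G)"
    "b \<in> verts (burgeon G)" "b' \<in> verts (burgeon G)"
    and ne: "a \<noteq> a'" "b \<noteq> b'"
    and ad: "adj (burgeon G) a b" "adj (burgeon G) a b'" "adj (burgeon G) a' b"
      "adj (burgeon G) a' b'" "\<not> adj (burgeon G) a a'"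
  shows False
proof -
  obtain a1 a2 where a: "a = prod_encode (a1,a2)" "adj G a1 a2" using burgeon_vertE[OF wf v(1)] .
  obtain a3 a4 where a': "a' = prod_encode (a3,a4)" "adj G a3 a4" using burgeon_vertE[OF wf v(2)] .
  obtain b1 b2 where b: "b = prod_encode (b1,b2)" "adj G b1 b2" using burgeon_vertE[OF wf v(3)] .
  obtain b3 b4 where b': "b' = prod_encode (b3,b4)" "adj G b3 b4" using burgeon_vertE[OF wf v(4)] .
  have "dart_adj (a1,a2) (b1,b2)" "dart_adj (a1,a2) (b3,b4)" "dart_adj (a3,a4) (b1,b2)"
    "dart_adj (a3,a4) (b3,b4)" "\<not> dart_adj (a1,a2) (a3,a4)"
    using ad a a' b b' adj_burgeon[OF wf] by auto
  moreover have "(a1,a2) \<noteq> (a3,a4)" "(b1,b2) \<noteq> (b3,b4)" using ne a a' b b' by auto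
  moreover have "a1 \<noteq> a2" "a3 \<noteq> a4" "b1 \<noteq> b2" "b3 \<noteq> b4"
    using a a' b b' wf_adjD[OF wf] by auto
  ultimately show False unfolding dart_adj_def by auto
qed

lemma edge_sub_arc_biclique:
  assumes "no_isolated_edge G" "adj G v u"
  shows "\<exists>t\<in>two_arcs G. {prod_encode (v,u), prod_encode (u,v)} \<subseteq> arc_biclique t"
proof -
  from assms consider w where "w \<noteq> u" "adj G v w" | w where "w \<noteq> v" "adj G u w"
    unfolding no_isolated_edge_def by blast
  thus ?thesis
  proof cases
    case 1
    hence "(u,v,w) \<in> two_arcs G" using assms(2) adj_sym by (simp add: two_arcs_def)
    thus ?thesis by (intro bexI[of _ "(u,v,w)"]) (auto simp: arc_biclique_eq)
  next
    case 2
    hence "(v,u,w) \<in> two_arcs G" using assms(2) by (simp add: two_arcs_def)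
    thus ?thesis by (intro bexI[of _ "(v,u,w)"]) (auto simp: arc_biclique_eq)
  qed
qed

lemma star_sub_arc_biclique:
  assumes wf: "wf_graph G" and n: "no_isolated_edge G" and y: "y \<in> verts (burgeon G)"
    and B: "B \<subseteq> verts (burgeon G)" "\<forall>b\<in>B. adj (burgeon G) y b"
      "\<forall>b\<in>B. \<forall>b'\<in>B. \<not> adj (burgeon G) b b'"
  shows "\<exists>t\<in>two_arcs G. insert y B \<subseteq> arc_biclique t"
proof -
  obtain v u where yv: "y = prod_encode (v,u)" "adj G v u" using burgeon_vertE[OF wf y] .
  have bform: "b = prod_encode (u,v) \<or> (\<exists>w. adj G v w \<and> w \<noteq> u \<and> b = prod_encode (v,w))"
    if bB: "b \<in> B" for b
  proof -
    obtain b1 b2 where bb: "b = prod_encode (b1,b2)" "adj G b1 b2"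
      using burgeon_vertE[OF wf] B(1) bB by blast
    have "dart_adj (v,u) (b1,b2)" using B(2) bB bb yv adj_burgeon[OF wf] by auto
    thus ?thesis using bb unfolding dart_adj_def by auto
  qed
  show ?thesis
  proof (cases "\<exists>w. adj G v w \<and> w \<noteq> u \<and> prod_encode (v,w) \<in> B")
    case True
    then obtain w where w: "adj G v w" "w \<noteq> u" "prod_encode (v,w) \<in> B" by blast
    have "b' \<in> {prod_encode (u,v), prod_encode (v,w)}" if b': "b' \<in> B" for b'
    proof (cases "b' = prod_encode (u,v)")
      case False
      then obtain w' where w': "adj G v w'" "w' \<noteq> u" "b' = prod_encode (v,w')"
        using bform b' by blast
      have "\<not> dart_adj (v,w) (v,w')"
        using B(3) w(3) b' adj_burgeon[OF wf w(1) w'(1)] w' by simp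
      thus ?thesis using w' unfolding dart_adj_def by simp
    qed simp
    moreover have "(u,v,w) \<in> two_arcs G" using yv w adj_sym by (simp add: two_arcs_def)
    ultimately show ?thesis using yv by (intro bexI[of _ "(u,v,w)"]) (auto simp: arc_biclique_eq)
  next
    case False
    hence "B \<subseteq> {prod_encode (u,v)}" using bform by blast
    thus ?thesis using edge_sub_arc_biclique[OF n yv(2)] yv by blast
  qed
qed

lemma induced_cbip_burgeon_sub_arc_biclique:
  assumes wf: "wf_graph G" and n: "no_isolated_edge G" and c: "induced_cbip (burgeon G) S"
  shows "\<exists>t\<in>two_arcs G. S \<subseteq> arc_biclique t"
proof -
  obtain A B where AB: "S \<subseteq> verts (burgeon G)" "A \<noteq> {}" "B \<noteq> {}" "A \<inter> B = {}" "A \<union> B = S"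
    "\<forall>a\<in>A. \<forall>b\<in>B. adj (burgeon G) a b" "\<forall>a\<in>A. \<forall>a'\<in>A. \<not> adj (burgeon G) a a'"
    "\<forall>b\<in>B. \<forall>b'\<in>B. \<not> adj (burgeon G) b b'"
    using c unfolding induced_cbip_def by blast
  have "\<not> ((\<exists>a\<in>A. \<exists>a'\<in>A. a \<noteq> a') \<and> (\<exists>b\<in>B. \<exists>b'\<in>B. b \<noteq> b'))"
  proof
    assume "(\<exists>a\<in>A. \<exists>a'\<in>A. a \<noteq> a') \<and> (\<exists>b\<in>B. \<exists>b'\<in>B. b \<noteq> b')"
    then obtain a a' b b' where "a \<in> A" "a' \<in> A" "a \<noteq> a'" "b \<in> B" "b' \<in> B" "b \<noteq> b'"
      by blast
    moreover from this have "a \<in> verts (burgeon G)" "a' \<in> verts (burgeon G)"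
      "b \<in> verts (burgeon G)" "b' \<in> verts (burgeon G)" using AB(1,5) by auto
    ultimately show False using burgeon_no_K22[OF wf] AB(6,7) by metis
  qed
  hence "(\<exists>y. A = {y}) \<or> (\<exists>y. B = {y})" using AB(2,3) by blast
  thus ?thesis
  proof
    assume "\<exists>y. A = {y}"
    then obtain y where y: "A = {y}" by blast
    thus ?thesis using star_sub_arc_biclique[OF wf n, of y B] AB by auto
  next
    assume "\<exists>y. B = {y}"
    then obtain y where y: "B = {y}" by blast
    have "\<forall>a\<in>A. adj (burgeon G) y a" using AB(6) y adj_sym by (metis singletonI)
    thus ?thesis using star_sub_arc_biclique[OF wf n, of y A] AB y by auto
  qed
qed

lemma arc_darts_eq:
  assumes "u \<noteq> v" "v \<noteq> w" "u \<noteq> w" "u' \<noteq> v'" "v' \<noteq> w'" "u' \<noteq> w'"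
    "arc_darts (u,v,w) = arc_darts (u',v',w')"
  shows "(u,v,w) = (u',v',w')"
proof -
  have "{(u,v),(v,u),(v,w)} = {(u',v'),(v',u'),(v',w')}" using assms(7) by simp
  hence "(v,u) \<in> {(u',v'),(v',u'),(v',w')}" "(v,w) \<in> {(u',v'),(v',u'),(v',w')}"
       "(u,v) \<in> {(u',v'),(v',u'),(v',w')}" by blast+
  thus ?thesis using assms(1-6) by auto
qed

lemma arc_biclique_cbip:
  assumes wf: "wf_graph G" and t: "t \<in> two_arcs G"
  shows "induced_cbip (burgeon G) (arc_biclique t)"
proof -
  obtain u v w where t_eq: "t = (u,v,w)" by (cases t)
  note d = two_arcsD[OF wf t[unfolded t_eq]]
  let ?a = "prod_encode (v,u)" and ?b1 = "prod_encode (u,v)" and ?b2 = "prod_encode (v,w)"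
  have "?a \<in> verts (burgeon G)" "?b1 \<in> verts (burgeon G)" "?b2 \<in> verts (burgeon G)"
    using d verts_burgeon[OF wf] by (auto simp: darts_def)
  moreover have "adj (burgeon G) ?a ?b1" "adj (burgeon G) ?a ?b2" "\<not> adj (burgeon G) ?b1 ?b2"
    "\<not> adj (burgeon G) ?b2 ?b1" "\<not> adj (burgeon G) ?a ?a"
    "\<not> adj (burgeon G) ?b1 ?b1" "\<not> adj (burgeon G) ?b2 ?b2"
    using d adj_burgeon[OF wf] by (auto simp: dart_adj_def)
  moreover have "{?a} \<inter> {?b1, ?b2} = {}" using d by (auto simp: prod_encode_eq)
  ultimately show ?thesis
    unfolding induced_cbip_def t_eq arc_biclique_def
    by (intro conjI exI[of _ "{?a}"] exI[of _ "{?b1, ?b2}"]) auto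
qed

lemma card_arc_biclique:
  assumes "wf_graph G" "t \<in> two_arcs G"
  shows "card (arc_biclique t) = 3"
proof -
  obtain u v w where t: "t = (u,v,w)" by (cases t)
  show ?thesis using two_arcsD[OF assms(1) assms(2)[unfolded t]] t
    by (simp add: arc_biclique_def prod_encode_eq)
qed

lemma inj_on_arc_biclique: "wf_graph G \<Longrightarrow> inj_on arc_biclique (two_arcs G)"
proof (rule inj_onI)
  fix t t' assume wf: "wf_graph G" and tt: "t \<in> two_arcs G" "t' \<in> two_arcs G"
    and eq: "arc_biclique t = arc_biclique t'"
  obtain u v w u' v' w' where tv: "t = (u,v,w)" "t' = (u',v',w')" by (cases t, cases t')
  note a = two_arcsD[OF wf tt(1)[unfolded tv]] and b = two_arcsD[OF wf tt(2)[unfolded tv]]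
  have "arc_darts t = arc_darts t'"
    using eq unfolding arc_biclique_def by (simp only: inj_image_eq_iff[OF inj_prod_encode])
  thus "t = t'" using arc_darts_eq[OF a(5,6,7) b(5,6,7)] tv by simp
qed

text \<open>Every induced complete bipartite subgraph lies in some arc_biclique t, and these
  all have three vertices.\<close>
lemma biclique_burgeon_iff:
  assumes wf: "wf_graph G" and n: "no_isolated_edge G"
  shows "biclique (burgeon G) S \<longleftrightarrow> S \<in> arc_biclique ` two_arcs G"
proof
  assume b: "biclique (burgeon G) S"
  then obtain t where t: "t \<in> two_arcs G" "S \<subseteq> arc_biclique t"
    using induced_cbip_burgeon_sub_arc_biclique[OF wf n] biclique_def by blast
  hence "arc_biclique t = S" using b arc_biclique_cbip[OF wf] unfolding biclique_def by blast
  thus "S \<in> arc_biclique ` two_arcs G" using t(1) by blast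
next
  assume "S \<in> arc_biclique ` two_arcs G"
  then obtain t where t: "t \<in> two_arcs G" "S = arc_biclique t" by blast
  show "biclique (burgeon G) S"
    unfolding biclique_def
  proof (intro conjI allI impI)
    show "induced_cbip (burgeon G) S" using arc_biclique_cbip[OF wf t(1)] t(2) by simp
    fix T assume T: "induced_cbip (burgeon G) T \<and> S \<subseteq> T"
    obtain t' where t': "t' \<in> two_arcs G" "T \<subseteq> arc_biclique t'"
      using induced_cbip_burgeon_sub_arc_biclique[OF wf n] T by blast
    have "finite (arc_biclique t')" by (cases t') (simp add: arc_biclique_def)
    hence "S = arc_biclique t'"
      using card_subset_eq[of "arc_biclique t'" S] T t t' card_arc_biclique[OF wf]
      by (metis order_trans)
    thus "T = S" using T t' by blast
  qed
qed

section \<open>Line graphs\<close>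

definition line_graph :: "ugraph \<Rightarrow> ugraph" where
  "line_graph G = (set_encode ` edges G,
     {{set_encode e, set_encode f} | e f. e \<in> edges G \<and> f \<in> edges G \<and> e \<noteq> f \<and> e \<inter> f \<noteq> {}})"

lemma verts_line_graph: "verts (line_graph G) = set_encode ` edges G"
  by (simp add: line_graph_def verts_def)

lemma edges_line_graph: "edges (line_graph G) =
    {{set_encode e, set_encode f} | e f. e \<in> edges G \<and> f \<in> edges G \<and> e \<noteq> f \<and> e \<inter> f \<noteq> {}}"
  by (simp add: line_graph_def edges_def)

lemma adj_line_graph:
  assumes wf: "wf_graph G" and e: "e \<in> edges G" and f: "f \<in> edges G"
  shows "adj (line_graph G) (set_encode e) (set_encode f) \<longleftrightarrow> e \<noteq> f \<and> e \<inter> f \<noteq> {}"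
proof
  assume "adj (line_graph G) (set_encode e) (set_encode f)"
  then obtain e' f' where ef: "{set_encode e, set_encode f} = {set_encode e', set_encode f'}"
    "e' \<in> edges G" "f' \<in> edges G" "e' \<noteq> f'" "e' \<inter> f' \<noteq> {}"
    unfolding adj_def edges_line_graph by auto
  have "finite e" "finite f" "finite e'" "finite f'" using finite_edge wf e f ef by auto
  with ef(1) have "(e = e' \<and> f = f') \<or> (e = f' \<and> f = e')"
    by (auto simp: doubleton_eq_iff set_encode_eq)
  thus "e \<noteq> f \<and> e \<inter> f \<noteq> {}" using ef by auto
next
  assume "e \<noteq> f \<and> e \<inter> f \<noteq> {}"
  thus "adj (line_graph G) (set_encode e) (set_encode f)"
    using e f unfolding adj_def edges_line_graph by auto
qed

lemma wf_line_graph: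
  assumes wf: "wf_graph G" shows "wf_graph (line_graph G)"
proof -
  have "x \<subseteq> verts (line_graph G) \<and> card x = 2" if x: "x \<in> edges (line_graph G)" for x
  proof -
    obtain e f where ef: "x = {set_encode e, set_encode f}" "e \<in> edges G" "f \<in> edges G" "e \<noteq> f"
      using x unfolding edges_line_graph by auto
    have "set_encode e \<noteq> set_encode f" using ef finite_edge[OF wf] set_encode_eq by metis
    thus ?thesis using ef by (auto simp: verts_line_graph)
  qed
  thus ?thesis using finite_edges[OF wf] by (simp add: wf_graph_def verts_line_graph)
qed

lemma wf_line_graph_iter: "wf_graph G \<Longrightarrow> wf_graph ((line_graph ^^ k) G)"
  by (induction k) (auto simp: wf_line_graph)

lemma line_graph_vertE:
  assumes "wf_graph G" "z \<in> verts (line_graph G)"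
  obtains x y where "adj G x y" "z = set_encode {x,y}"
  using assms wf_edgeE unfolding verts_line_graph by blast

lemma adj_line_graphE:
  assumes wf: "wf_graph G" and a: "adj (line_graph G) x y"
  obtains e f where "e \<in> edges G" "f \<in> edges G" "x = set_encode e" "y = set_encode f"
    "e \<noteq> f" "e \<inter> f \<noteq> {}"
proof -
  have "x \<in> set_encode ` edges G" "y \<in> set_encode ` edges G"
    using wf_adjD[OF wf_line_graph[OF wf] a] by (auto simp: verts_line_graph)
  then obtain e f where "e \<in> edges G" "f \<in> edges G" "x = set_encode e" "y = set_encode f"
    by blast
  moreover from this have "e \<noteq> f" "e \<inter> f \<noteq> {}" using a adj_line_graph[OF wf] by auto
  ultimately show ?thesis by (rule that)
qed

lemma adj_line_graphI:
  assumes "wf_graph G" "e \<in> edges G" "f \<in> edges G" "e \<noteq> f" "x \<in> e" "x \<in> f"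
  shows "adj (line_graph G) (set_encode e) (set_encode f)"
  using adj_line_graph[OF assms(1-3)] assms(4-6) by blast

lemma line_graph_mono: "edges H \<subseteq> edges G \<Longrightarrow> edges (line_graph H) \<subseteq> edges (line_graph G)"
  unfolding edges_line_graph by blast

lemma line_graph_iter_mono:
  "edges H \<subseteq> edges G \<Longrightarrow> edges ((line_graph ^^ k) H) \<subseteq> edges ((line_graph ^^ k) G)"
  by (induction k) (auto simp: line_graph_mono)

lemma connected_line_graph:
  assumes wf: "wf_graph G" and c: "connected_graph G"
  shows "connected_graph (line_graph G)"
proof -
  have reach: "(adj (line_graph G))\<^sup>*\<^sup>* (set_encode e) (set_encode f)"
    if "(adj G)\<^sup>*\<^sup>* a b" "e \<in> edges G" "a \<in> e" "f \<in> edges G" "b \<in> f" for a b e f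
    using that
  proof (induction arbitrary: f rule: rtranclp_induct)
    case base
    thus ?case using adj_line_graphI[OF wf] by (metis r_into_rtranclp rtranclp.rtrancl_refl)
  next
    case (step y z)
    have g: "{y,z} \<in> edges G" using step(2) by (simp add: adj_def)
    have "(adj (line_graph G))\<^sup>*\<^sup>* (set_encode e) (set_encode {y,z})"
      using step.IH[OF step.prems(1,2) g insertI1] .
    moreover have "{y,z} = f \<or> adj (line_graph G) (set_encode {y,z}) (set_encode f)"
      using adj_line_graphI[OF wf g step.prems(3), of z] step.prems(4) by blast
    ultimately show ?case by auto
  qed
  show ?thesis
    unfolding connected_graph_def
  proof (intro ballI)
    fix x y assume "x \<in> verts (line_graph G)" "y \<in> verts (line_graph G)"
    then obtain a b c d where "adj G a b" "x = set_encode {a,b}" "adj G c d" "y = set_encode {c,d}"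
      by (metis line_graph_vertE wf)
    moreover from this have "(adj G)\<^sup>*\<^sup>* a c" using c wf_adjD[OF wf] connected_graph_def by blast
    ultimately show "(adj (line_graph G))\<^sup>*\<^sup>* x y" using reach by (simp add: adj_def)
  qed
qed

lemma connected_line_graph_iter:
  "wf_graph G \<Longrightarrow> connected_graph G \<Longrightarrow> connected_graph ((line_graph ^^ k) G)"
  by (induction k) (auto simp: connected_line_graph wf_line_graph_iter)

fun line_dart :: "nat \<times> nat \<times> nat \<Rightarrow> nat \<times> nat" where
  "line_dart (u,v,w) = (set_encode {u,v}, set_encode {v,w})"

lemma inj_on_line_dart: "wf_graph G \<Longrightarrow> inj_on line_dart (two_arcs G)"
proof (rule inj_onI)
  fix t t' assume wf: "wf_graph G" and tt: "t \<in> two_arcs G" "t' \<in> two_arcs G"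
    and eq: "line_dart t = line_dart t'"
  obtain u v w u' v' w' where tv: "t = (u,v,w)" "t' = (u',v',w')" by (cases t, cases t')
  have e: "{u,v} = {u',v'}" "{v,w} = {v',w'}"
    using eq tv set_encode_eq[of "{_,_}" "{_,_}"] by auto
  have "v = v'" using e two_arcsD(7)[OF wf tt(2)[unfolded tv]] by (auto simp: doubleton_eq_iff)
  thus "t = t'" using e tv by (auto simp: doubleton_eq_iff)
qed

lemma darts_line_graph:
  assumes wf: "wf_graph G"
  shows "darts (line_graph G) = line_dart ` two_arcs G"
proof (intro equalityI subsetI)
  fix p assume "p \<in> darts (line_graph G)"
  then obtain x y where p: "p = (x,y)" "adj (line_graph G) x y" unfolding darts_def by auto
  then obtain e f where ef: "e \<in> edges G" "f \<in> edges G" "x = set_encode e" "y = set_encode f"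
    "e \<noteq> f" "e \<inter> f \<noteq> {}"
    using adj_line_graphE[OF wf] by metis
  obtain v where v: "v \<in> e" "v \<in> f" using ef(6) by blast
  obtain u where u: "e = {v,u}" "adj G v u" using wf_edge_containsE[OF wf ef(1) v(1)] .
  obtain w where w: "f = {v,w}" "adj G v w" using wf_edge_containsE[OF wf ef(2) v(2)] .
  have "(u,v,w) \<in> two_arcs G" using u w ef(5) adj_sym by (auto simp: two_arcs_def)
  moreover have "p = line_dart (u,v,w)" using p ef u w by (simp add: insert_commute)
  ultimately show "p \<in> line_dart ` two_arcs G" by blast
next
  fix p assume "p \<in> line_dart ` two_arcs G"
  then obtain u v w where t: "(u,v,w) \<in> two_arcs G" "p = line_dart (u,v,w)" by auto
  note d = two_arcsD[OF wf t(1)]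
  have "{u,v} \<in> edges G" "{v,w} \<in> edges G" using d by (auto simp: adj_def)
  moreover have "{u,v} \<noteq> {v,w}" "{u,v} \<inter> {v,w} \<noteq> {}" using d by (auto simp: doubleton_eq_iff)
  ultimately have "adj (line_graph G) (set_encode {u,v}) (set_encode {v,w})"
    using adj_line_graph[OF wf] by simp
  thus "p \<in> darts (line_graph G)" using t by (simp add: darts_def)
qed

lemma card_darts_line_graph: "wf_graph G \<Longrightarrow> card (darts (line_graph G)) = card (two_arcs G)"
  by (simp add: darts_line_graph card_image inj_on_line_dart)

lemma nbrs_line_graph:
  assumes wf: "wf_graph G" and a: "adj G x y"
  shows "nbrs (line_graph G) (set_encode {x,y}) =
    (\<lambda>w. set_encode {x,w}) ` (nbrs G x - {y}) \<union> (\<lambda>w. set_encode {y,w}) ` (nbrs G y - {x})"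
proof (intro equalityI subsetI)
  have exy: "{x,y} \<in> edges G" using a by (simp add: adj_def)
  fix z assume "z \<in> nbrs (line_graph G) (set_encode {x,y})"
  then obtain e f where ef: "e \<in> edges G" "f \<in> edges G" "set_encode {x,y} = set_encode e"
    "z = set_encode f" "e \<noteq> f" "e \<inter> f \<noteq> {}"
    using adj_line_graphE[OF wf] unfolding nbrs_def by blast
  have "e = {x,y}" using ef(3) set_encode_eq[OF _ finite_edge[OF wf ef(1)], of "{x,y}"] by simp
  hence f: "f \<noteq> {x,y}" "x \<in> f \<or> y \<in> f" using ef by auto
  show "z \<in> (\<lambda>w. set_encode {x,w}) ` (nbrs G x - {y}) \<union> (\<lambda>w. set_encode {y,w}) ` (nbrs G y - {x})"
  proof (cases "x \<in> f")
    case True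
    obtain w where "f = {x,w}" "adj G x w" using wf_edge_containsE[OF wf ef(2) True] .
    thus ?thesis using ef(4) f(1) by (auto simp: nbrs_def)
  next
    case False
    obtain w where "f = {y,w}" "adj G y w" using wf_edge_containsE[OF wf ef(2)] f(2) False by blast
    thus ?thesis using ef(4) f(1) by (auto simp: nbrs_def insert_commute)
  qed
next
  fix z
  assume "z \<in> (\<lambda>w. set_encode {x,w}) ` (nbrs G x - {y}) \<union> (\<lambda>w. set_encode {y,w}) ` (nbrs G y - {x})"
  then obtain p q where "adj G p q" "{p,q} \<noteq> {x,y}" "p \<in> {x,y}" "z = set_encode {p,q}"
    by (auto simp: nbrs_def doubleton_eq_iff)
  moreover have "{x,y} \<in> edges G" "{p,q} \<in> edges G" using a \<open>adj G p q\<close> by (simp_all add: adj_def)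
  ultimately show "z \<in> nbrs (line_graph G) (set_encode {x,y})"
    using adj_line_graphI[OF wf, of "{x,y}" "{p,q}" p] unfolding nbrs_def by auto
qed

lemma card_nbrs_line_graph:
  assumes wf: "wf_graph G" and a: "adj G x y"
  shows "card (nbrs (line_graph G) (set_encode {x,y})) =
    (card (nbrs G x) - 1) + (card (nbrs G y) - 1)"
proof -
  have xy: "x \<noteq> y" using wf_adjD[OF wf a] by simp
  have "inj_on (\<lambda>w. set_encode {x,w}) (nbrs G x - {y})" "inj_on (\<lambda>w. set_encode {y,w}) (nbrs G y - {x})"
    by (auto intro!: inj_onI simp: set_encode_eq doubleton_eq_iff)
  moreover have "(\<lambda>w. set_encode {x,w}) ` (nbrs G x - {y}) \<inter> (\<lambda>w. set_encode {y,w}) ` (nbrs G y - {x}) = {}"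
    using xy by (auto simp: set_encode_eq doubleton_eq_iff)
  moreover have "card (nbrs G x - {y}) = card (nbrs G x) - 1" "card (nbrs G y - {x}) = card (nbrs G y) - 1"
    using a adj_sym by (simp_all add: card_Diff_singleton finite_nbrs[OF wf] nbrs_def)
  ultimately show ?thesis
    unfolding nbrs_line_graph[OF wf a]
    by (simp add: card_Un_disjoint finite_nbrs[OF wf] card_image)
qed

lemma nbrs_not_vert: "wf_graph G \<Longrightarrow> z \<notin> verts G \<Longrightarrow> nbrs G z = {}"
  unfolding nbrs_def using wf_adjD by blast

section \<open>KB_e(B(G)) is isomorphic to B(L(G))\<close>

lemma arc_darts_share_imp:
  assumes d: "u \<noteq> v" "v \<noteq> w" "u \<noteq> w" "u' \<noteq> v'" "v' \<noteq> w'" "u' \<noteq> w'"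
    and ne: "(u,v,w) \<noteq> (u',v',w')"
    and dd: "d \<in> arc_darts (u,v,w) \<inter> arc_darts (u',v',w')"
      "d' \<in> arc_darts (u,v,w) \<inter> arc_darts (u',v',w')" "dart_adj d d'"
  shows "dart_adj ({u,v},{v,w}) ({u',v'},{v',w'})"
proof -
  have "d \<in> {(u,v),(v,u),(v,w)}" "d' \<in> {(u,v),(v,u),(v,w)}" using dd(1,2) by auto
  hence c: "(d = (u,v) \<and> d' = (v,u)) \<or> (d = (v,u) \<and> d' = (u,v)) \<or>
      (d = (v,u) \<and> d' = (v,w)) \<or> (d = (v,w) \<and> d' = (v,u))"
    using dd(3) d unfolding dart_adj_def insert_iff empty_iff by (elim disjE) auto
  show ?thesis
  proof (cases "(d = (u,v) \<and> d' = (v,u)) \<or> (d = (v,u) \<and> d' = (u,v))")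
    case True
    hence "(u,v) \<in> arc_darts (u',v',w')" "(v,u) \<in> arc_darts (u',v',w')" using dd(1,2) by auto
    hence uv: "{u,v} = {u',v'}" using d by auto
    have "{v,w} \<noteq> {v',w'}"
    proof
      assume vw: "{v,w} = {v',w'}"
      have "v = v' \<or> (v = u' \<and> u = v')" using uv by (auto simp: doubleton_eq_iff)
      thus False using uv vw ne d by (auto simp: doubleton_eq_iff)
    qed
    thus ?thesis using uv by (simp add: dart_adj_def)
  next
    case False
    hence "(v,u) \<in> arc_darts (u',v',w')" "(v,w) \<in> arc_darts (u',v',w')" using c dd(1,2) by auto
    hence "v = v' \<and> ((u = u' \<and> w = w') \<or> (u = w' \<and> w = u'))" using d by auto
    hence "v = v'" "u = w'" "w = u'" using ne by auto
    thus ?thesis using d by (auto simp: dart_adj_def insert_commute)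
  qed
qed

lemma arc_darts_share_iff:
  assumes d: "u \<noteq> v" "v \<noteq> w" "u \<noteq> w" "u' \<noteq> v'" "v' \<noteq> w'" "u' \<noteq> w'"
  shows "(u,v,w) \<noteq> (u',v',w') \<and> (\<exists>d\<in>arc_darts (u,v,w) \<inter> arc_darts (u',v',w').
            \<exists>d'\<in>arc_darts (u,v,w) \<inter> arc_darts (u',v',w'). dart_adj d d')
     \<longleftrightarrow> dart_adj ({u,v},{v,w}) ({u',v'},{v',w'})"
proof
  assume "(u,v,w) \<noteq> (u',v',w') \<and> (\<exists>d\<in>arc_darts (u,v,w) \<inter> arc_darts (u',v',w').
            \<exists>d'\<in>arc_darts (u,v,w) \<inter> arc_darts (u',v',w'). dart_adj d d')"
  thus "dart_adj ({u,v},{v,w}) ({u',v'},{v',w'})" using arc_darts_share_imp[OF d] by blast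
next
  assume "dart_adj ({u,v},{v,w}) ({u',v'},{v',w'})"
  hence "({u,v} = {u',v'} \<and> {v,w} \<noteq> {v',w'}) \<or> ({u',v'} = {v,w} \<and> {v',w'} = {u,v})"
    by (simp add: dart_adj_def)
  thus "(u,v,w) \<noteq> (u',v',w') \<and> (\<exists>d\<in>arc_darts (u,v,w) \<inter> arc_darts (u',v',w').
            \<exists>d'\<in>arc_darts (u,v,w) \<inter> arc_darts (u',v',w'). dart_adj d d')"
  proof
    assume a: "{u,v} = {u',v'} \<and> {v,w} \<noteq> {v',w'}"
    hence "(u,v) \<in> arc_darts (u',v',w')" "(v,u) \<in> arc_darts (u',v',w')"
      by (auto simp: doubleton_eq_iff)
    moreover have "dart_adj (u,v) (v,u)" by (simp add: dart_adj_def)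
    ultimately show ?thesis using a by auto
  next
    assume a: "{u',v'} = {v,w} \<and> {v',w'} = {u,v}"
    hence "v' = v" "u' = w" "w' = u" using d by (auto simp: doubleton_eq_iff)
    moreover have "dart_adj (v,u) (v,w)" using d by (simp add: dart_adj_def)
    ultimately show ?thesis using d by auto
  qed
qed

lemma share_edge_arc_biclique:
  assumes wf: "wf_graph G" and t: "t \<in> two_arcs G"
  shows "share_edge (burgeon G) (arc_biclique t) (arc_biclique t') \<longleftrightarrow>
     (\<exists>d\<in>arc_darts t \<inter> arc_darts t'. \<exists>d'\<in>arc_darts t \<inter> arc_darts t'. dart_adj d d')"
proof -
  have "adj G (fst d) (snd d)" if "d \<in> arc_darts t" for d
    using that two_arcsD[OF wf] t by (cases t) auto
  hence "adj (burgeon G) (prod_encode d) (prod_encode d') = dart_adj d d'"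
    if "d \<in> arc_darts t" "d' \<in> arc_darts t" for d d'
    using that adj_burgeon[OF wf, of "fst d" "snd d" "fst d'" "snd d'"] by simp
  moreover have "arc_biclique t \<inter> arc_biclique t' = prod_encode ` (arc_darts t \<inter> arc_darts t')"
    unfolding arc_biclique_def by (simp add: image_Int inj_prod_encode)
  ultimately show ?thesis unfolding share_edge_def by auto
qed

lemma KBe_burgeon_isomorphic:
  assumes wf: "wf_graph G" and n: "no_isolated_edge G"
  shows "isomorphic (KBe (burgeon G)) (burgeon (line_graph G))"
proof (rule isomorphic_reindex[where T = "two_arcs G" and \<alpha> = "set_encode \<circ> arc_biclique"
      and \<beta> = "prod_encode \<circ> line_dart"])
  show "verts (KBe (burgeon G)) = (set_encode \<circ> arc_biclique) ` two_arcs G"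
    unfolding verts_KBe biclique_burgeon_iff[OF wf n] by (auto simp: image_comp)
  show "verts (burgeon (line_graph G)) = (prod_encode \<circ> line_dart) ` two_arcs G"
    unfolding verts_burgeon[OF wf_line_graph[OF wf]] darts_line_graph[OF wf] image_comp ..
  have "finite (arc_biclique t)" for t by (cases t) (simp add: arc_biclique_def)
  thus "inj_on (set_encode \<circ> arc_biclique) (two_arcs G)"
    using inj_on_arc_biclique[OF wf] by (auto intro!: inj_onI simp: set_encode_eq inj_on_eq_iff)
  show "inj_on (prod_encode \<circ> line_dart) (two_arcs G)"
    using inj_on_line_dart[OF wf] inj_prod_encode by (simp add: comp_inj_on inj_on_subset)
  fix t t' assume tt: "t \<in> two_arcs G" "t' \<in> two_arcs G"
  obtain u v w u' v' w' where tv: "t = (u,v,w)" "t' = (u',v',w')" by (cases t, cases t')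
  note a = two_arcsD[OF wf tt(1)[unfolded tv]] and b = two_arcsD[OF wf tt(2)[unfolded tv]]
  have "biclique (burgeon G) (arc_biclique t)" "biclique (burgeon G) (arc_biclique t')"
    using biclique_burgeon_iff[OF wf n] tt by auto
  moreover have "(arc_biclique t = arc_biclique t') = (t = t')"
    using inj_on_arc_biclique[OF wf] tt by (meson inj_on_eq_iff)
  ultimately have "adj (KBe (burgeon G)) (set_encode (arc_biclique t)) (set_encode (arc_biclique t'))
      \<longleftrightarrow> dart_adj ({u,v},{v,w}) ({u',v'},{v',w'})"
    using adj_KBe[OF wf_burgeon[OF wf]] share_edge_arc_biclique[OF wf tt(1)]
      arc_darts_share_iff[OF a(5,6,7) b(5,6,7)] tv by simp
  moreover have "adj (line_graph G) (set_encode {u,v}) (set_encode {v,w})"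
    "adj (line_graph G) (set_encode {u',v'}) (set_encode {v',w'})"
    using darts_line_graph[OF wf] tt tv unfolding darts_def by force+
  moreover have "finite {u,v}" "finite {v,w}" "finite {u',v'}" "finite {v',w'}" by auto
  ultimately show "adj (burgeon (line_graph G)) ((prod_encode \<circ> line_dart) t) ((prod_encode \<circ> line_dart) t')
      = adj (KBe (burgeon G)) ((set_encode \<circ> arc_biclique) t) ((set_encode \<circ> arc_biclique) t')"
    using adj_burgeon[OF wf_line_graph[OF wf]] tv unfolding dart_adj_def by (simp add: set_encode_eq)
qed

section \<open>Counting darts of iterated line graphs\<close>

definition degree_le_2 :: "ugraph \<Rightarrow> bool" where
  "degree_le_2 G \<longleftrightarrow> (\<forall>v. card (nbrs G v) \<le> 2)"

definition edge_degree_le_4 :: "ugraph \<Rightarrow> bool" where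
  "edge_degree_le_4 G \<longleftrightarrow> (\<forall>x y. adj G x y \<longrightarrow> card (nbrs G x) + card (nbrs G y) \<le> 4)"

definition leafless_branching :: "ugraph \<Rightarrow> bool" where
  "leafless_branching G \<longleftrightarrow> (\<forall>v. card (nbrs G v) \<noteq> 1) \<and> (\<exists>v. 3 \<le> card (nbrs G v))"

text \<open>By card_nbrs_line_graph, this says that L(G) is leafless and branching.\<close>
definition edge_leafless_branching :: "ugraph \<Rightarrow> bool" where
  "edge_leafless_branching G \<longleftrightarrow>
     (\<forall>x y. adj G x y \<longrightarrow> 4 \<le> card (nbrs G x) + card (nbrs G y)) \<and>
     (\<exists>x y. adj G x y \<and> 5 \<le> card (nbrs G x) + card (nbrs G y))"

lemma degree_le_2_imp_edge_degree_le_4: "degree_le_2 G \<Longrightarrow> edge_degree_le_4 G"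
  unfolding degree_le_2_def edge_degree_le_4_def by (metis add_mono numeral_Bit0 numeral_plus_numeral)

lemma degree_le_2_line_graph:
  assumes wf: "wf_graph G" and e: "edge_degree_le_4 G"
  shows "degree_le_2 (line_graph G)"
  unfolding degree_le_2_def
proof
  fix z show "card (nbrs (line_graph G) z) \<le> 2"
  proof (cases "z \<in> verts (line_graph G)")
    case False thus ?thesis using nbrs_not_vert[OF wf_line_graph[OF wf]] by simp
  next
    case True
    then obtain x y where xy: "adj G x y" "z = set_encode {x,y}" using line_graph_vertE[OF wf] by metis
    moreover have "1 \<le> card (nbrs G x)" "1 \<le> card (nbrs G y)"
      using xy(1) card_nbrs_pos[OF wf] adj_sym by metis+
    ultimately show ?thesis using card_nbrs_line_graph[OF wf xy(1)] e edge_degree_le_4_def by fastforce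
  qed
qed

lemma leafless_branching_line_graph:
  assumes wf: "wf_graph G" and s: "edge_leafless_branching G"
  shows "leafless_branching (line_graph G)"
  unfolding leafless_branching_def
proof
  have deg: "card (nbrs (line_graph G) (set_encode {x,y})) + 2 = card (nbrs G x) + card (nbrs G y)"
    if "adj G x y" for x y
    using card_nbrs_line_graph[OF wf that] card_nbrs_pos[OF wf that] card_nbrs_pos[OF wf, of y x]
      that adj_sym by fastforce
  show "\<forall>z. card (nbrs (line_graph G) z) \<noteq> 1"
  proof
    fix z show "card (nbrs (line_graph G) z) \<noteq> 1"
    proof (cases "z \<in> verts (line_graph G)")
      case False thus ?thesis using nbrs_not_vert[OF wf_line_graph[OF wf]] by simp
    next
      case True
      then obtain x y where "adj G x y" "z = set_encode {x,y}" using line_graph_vertE[OF wf] by metis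
      thus ?thesis using deg s edge_leafless_branching_def by fastforce
    qed
  qed
  obtain x y where "adj G x y" "5 \<le> card (nbrs G x) + card (nbrs G y)"
    using s edge_leafless_branching_def by blast
  hence "3 \<le> card (nbrs (line_graph G) (set_encode {x,y}))" using deg by fastforce
  thus "\<exists>z. 3 \<le> card (nbrs (line_graph G) z)" by blast
qed

lemma leafless_branching_imp_edge:
  assumes wf: "wf_graph G" and p: "leafless_branching G"
  shows "edge_leafless_branching G"
proof -
  have d2: "2 \<le> card (nbrs G x)" if "adj G x y" for x y
    using card_nbrs_pos[OF wf that] p leafless_branching_def by (metis le_antisym not_less_eq_eq numeral_2_eq_2 One_nat_def)
  obtain v where v: "3 \<le> card (nbrs G v)" using p leafless_branching_def by blast
  then obtain u where "adj G v u" by (metis card.empty empty_iff nbrs_def not_numeral_le_zero mem_Collect_eq subsetI subset_empty)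
  hence "adj G v u \<and> 5 \<le> card (nbrs G v) + card (nbrs G u)" using v d2 adj_sym by fastforce
  moreover have "4 \<le> card (nbrs G x) + card (nbrs G y)" if "adj G x y" for x y
    using d2[OF that] d2[of y x] that adj_sym by fastforce
  ultimately show ?thesis unfolding edge_leafless_branching_def by blast
qed

lemma leafless_branching_line_graph_iter:
  "wf_graph G \<Longrightarrow> leafless_branching G \<Longrightarrow> leafless_branching ((line_graph ^^ k) G)"
  by (induction k)
    (auto simp: leafless_branching_line_graph leafless_branching_imp_edge wf_line_graph_iter)

lemma degree_le_2_third_nbr:
  assumes wf: "wf_graph G" and m: "degree_le_2 G"
    and a: "adj G v p" "adj G v q" "adj G v w" "p \<noteq> q"
  shows "w = p \<or> w = q"
proof (rule ccontr)
  assume "\<not> (w = p \<or> w = q)"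
  hence "card {p,q,w} = 3" using a(4) by auto
  moreover have "card {p,q,w} \<le> card (nbrs G v)"
    using a finite_nbrs[OF wf] by (intro card_mono) (auto simp: nbrs_def)
  moreover have "card (nbrs G v) \<le> 2" using m unfolding degree_le_2_def by blast
  ultimately show False by simp
qed

lemma card_two_arcs_le_darts:
  assumes wf: "wf_graph G" and m: "degree_le_2 G"
  shows "card (two_arcs G) \<le> card (darts G)"
proof -
  have "inj_on (\<lambda>(u,v,w). (u,v)) (two_arcs G)"
  proof (rule inj_onI, clarsimp)
    fix u v w w' assume "(u,v,w) \<in> two_arcs G" "(u,v,w') \<in> two_arcs G"
    thus "w = w'" using degree_le_2_third_nbr[OF wf m, of v u w w'] adj_sym
      by (auto simp: two_arcs_def)
  qed
  moreover have "(\<lambda>(u,v,w). (u,v)) ` two_arcs G \<subseteq> darts G" by (auto simp: two_arcs_def darts_def)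
  ultimately show ?thesis using card_inj_on_le finite_darts[OF wf] by metis
qed

text \<open>Without leaves every dart (u,v) extends to a 2-arc, and at a branch vertex
  some dart extends in two ways.\<close>
lemma card_darts_less_two_arcs:
  assumes wf: "wf_graph G" and p: "leafless_branching G"
  shows "card (darts G) < card (two_arcs G)"
proof -
  have "\<exists>w. adj G v w \<and> w \<noteq> u" if "(u,v) \<in> darts G" for u v
  proof -
    have uv: "u \<in> nbrs G v" using that adj_sym by (simp add: darts_def nbrs_def)
    hence "2 \<le> card (nbrs G v)" using card_nbrs_pos[OF wf] p leafless_branching_def
      by (metis Suc_1 le_antisym not_less_eq_eq One_nat_def mem_Collect_eq nbrs_def)
    hence "nbrs G v - {u} \<noteq> {}" using uv finite_nbrs[OF wf] by (metis card_Diff_singleton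
          card.empty diff_is_0_eq not_less_eq_eq numeral_2_eq_2 One_nat_def)
    thus ?thesis by (auto simp: nbrs_def)
  qed
  hence "\<forall>d\<in>darts G. \<exists>w. adj G (snd d) w \<and> w \<noteq> fst d" by auto
  hence "\<exists>nxt. \<forall>d\<in>darts G. adj G (snd d) (nxt d) \<and> nxt d \<noteq> fst d" by (rule bchoice)
  then obtain nxt where nxt: "\<forall>d\<in>darts G. adj G (snd d) (nxt d) \<and> nxt d \<noteq> fst d" ..
  let ?f = "\<lambda>d. (fst d, snd d, nxt d)"
  have inj: "inj_on ?f (darts G)" by (rule inj_onI) (simp add: prod_eq_iff)
  have sub: "?f ` darts G \<subseteq> two_arcs G"
    using nxt unfolding two_arcs_def darts_def by auto (metis fst_conv snd_conv)
  obtain v0 where "3 \<le> card (nbrs G v0)" using p leafless_branching_def by blast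
  then obtain a b c where abc: "adj G v0 a" "adj G v0 b" "adj G v0 c" "distinct [a,b,c]"
    by (rule card_nbrs_ge_3E)
  have "(a,v0,b) \<in> two_arcs G" "(a,v0,c) \<in> two_arcs G" using abc adj_sym by (auto simp: two_arcs_def)
  moreover have "(a,v0,b) \<notin> ?f ` darts G \<or> (a,v0,c) \<notin> ?f ` darts G" using abc by auto
  ultimately have "?f ` darts G \<subset> two_arcs G" using sub by blast
  hence "card (?f ` darts G) < card (two_arcs G)" using finite_two_arcs[OF wf] psubset_card_mono by blast
  thus ?thesis using card_image[OF inj] by simp
qed

lemma card_darts_line_graph_iter_ge:
  assumes wf: "wf_graph H" and p: "leafless_branching H"
  shows "card (darts H) + k \<le> card (darts ((line_graph ^^ k) H))"
proof (induction k)
  case (Suc k)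
  have "wf_graph ((line_graph ^^ k) H)" using wf_line_graph_iter[OF wf] .
  thus ?case using Suc card_darts_line_graph card_darts_less_two_arcs
      leafless_branching_line_graph_iter[OF wf p] by fastforce
qed simp

lemma card_darts_line_graph_iter_le:
  assumes wf: "wf_graph G" and e: "edge_degree_le_4 G"
  shows "card (darts ((line_graph ^^ k) G)) \<le> max (card (darts G)) (card (darts (line_graph G)))"
proof -
  have m: "degree_le_2 ((line_graph ^^ Suc k) G)" for k
  proof (induction k)
    case (Suc k)
    thus ?case using degree_le_2_line_graph wf_line_graph_iter[OF wf, of "Suc k"]
        degree_le_2_imp_edge_degree_le_4 by simp
  qed (simp add: degree_le_2_line_graph[OF wf e])
  have "card (darts ((line_graph ^^ Suc k) G)) \<le> card (darts (line_graph G))" for k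
  proof (induction k)
    case (Suc k)
    have w: "wf_graph ((line_graph ^^ Suc k) G)" using wf_line_graph_iter[OF wf] .
    have "card (darts ((line_graph ^^ Suc (Suc k)) G)) = card (two_arcs ((line_graph ^^ Suc k) G))"
      using card_darts_line_graph[OF w] by simp
    also have "\<dots> \<le> card (darts ((line_graph ^^ Suc k) G))" using card_two_arcs_le_darts[OF w m] .
    finally show ?case using Suc.IH by simp
  qed simp
  thus ?thesis by (cases k) (auto simp: le_max_iff_disj)
qed

section \<open>Paths, cycles and the claw\<close>

definition simple_path :: "ugraph \<Rightarrow> nat list \<Rightarrow> bool" where
  "simple_path G xs \<longleftrightarrow> distinct xs \<and> xs \<noteq> [] \<and> set xs \<subseteq> verts G \<and>
     (\<forall>i. Suc i < length xs \<longrightarrow> adj G (xs!i) (xs!Suc i))"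

lemma simple_path_rev:
  assumes "simple_path G xs"
  shows "simple_path G (rev xs)"
proof -
  have "adj G (rev xs ! i) (rev xs ! Suc i)" if i: "Suc i < length xs" for i
  proof -
    let ?j = "length xs - Suc (Suc i)"
    have "adj G (xs ! ?j) (xs ! Suc ?j)" using assms i unfolding simple_path_def by simp
    moreover have "Suc ?j = length xs - Suc i" using i by simp
    ultimately show ?thesis using i adj_sym by (simp add: rev_nth)
  qed
  thus ?thesis using assms unfolding simple_path_def by simp
qed

lemma longest_simple_pathE:
  assumes wf: "wf_graph G" and v: "v \<in> verts G"
  obtains xs where "simple_path G xs" "\<And>ys. simple_path G ys \<Longrightarrow> length ys \<le> length xs"
proof -
  let ?P = "{xs. simple_path G xs}"
  have "length xs \<le> card (verts G)" if "simple_path G xs" for xs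
    using that wf_finite[OF wf] unfolding simple_path_def by (metis card_mono distinct_card)
  hence "?P \<subseteq> {xs. set xs \<subseteq> verts G \<and> length xs \<le> card (verts G)}"
    by (auto simp: simple_path_def)
  hence fin: "finite (length ` ?P)" using finite_lists_length_le[OF wf_finite[OF wf]]
    by (meson finite_imageI finite_subset)
  have "[v] \<in> ?P" using v by (simp add: simple_path_def)
  hence "Max (length ` ?P) \<in> length ` ?P" using fin Max_in by blast
  then obtain xs where "xs \<in> ?P" "length xs = Max (length ` ?P)" by auto
  thus ?thesis using that fin by (metis Max_ge imageI mem_Collect_eq)
qed

lemma longest_simple_path_hd_nbr:
  assumes wf: "wf_graph G" and xs: "simple_path G xs"
    and mx: "\<And>ys. simple_path G ys \<Longrightarrow> length ys \<le> length xs"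
    and w: "adj G (xs!0) w"
  shows "w \<in> set xs"
proof (rule ccontr)
  assume nw: "w \<notin> set xs"
  have "adj G ((w # xs) ! i) ((w # xs) ! Suc i)" if "Suc i < length (w # xs)" for i
    using that xs w adj_sym unfolding simple_path_def by (cases i) auto
  hence "simple_path G (w # xs)" using xs nw wf_adjD[OF wf w] unfolding simple_path_def by simp
  thus False using mx by fastforce
qed

lemma longest_simple_path_last_nbr:
  assumes wf: "wf_graph G" and xs: "simple_path G xs"
    and mx: "\<And>ys. simple_path G ys \<Longrightarrow> length ys \<le> length xs"
    and w: "adj G (xs!(length xs - 1)) w"
  shows "w \<in> set xs"
proof -
  have "xs \<noteq> []" using xs simple_path_def by blast
  hence "rev xs ! 0 = xs ! (length xs - 1)" by (simp add: rev_nth)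
  thus ?thesis using longest_simple_path_hd_nbr[OF wf simple_path_rev[OF xs], of w] mx w by simp
qed

lemma degree_le_2_simple_path_nbr:
  assumes wf: "wf_graph G" and m: "degree_le_2 G" and xs: "simple_path G xs"
    and i: "0 < i" "Suc i < length xs" and w: "adj G (xs!i) w"
  shows "w = xs!(i-1) \<or> w = xs!Suc i"
proof -
  have "Suc (i-1) < length xs" "Suc (i-1) = i" using i by auto
  hence "adj G (xs!(i-1)) (xs!i)" using xs unfolding simple_path_def by metis
  hence "adj G (xs!i) (xs!(i-1))" using adj_sym by metis
  moreover have "adj G (xs!i) (xs!Suc i)" using xs i unfolding simple_path_def by simp
  moreover have "xs!(i-1) \<noteq> xs!Suc i" using xs i by (simp add: simple_path_def nth_eq_iff_index_eq)
  ultimately show ?thesis using degree_le_2_third_nbr[OF wf m _ _ w] by blast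
qed

lemma degree_le_2_simple_path_adj:
  assumes wf: "wf_graph G" and m: "degree_le_2 G" and xs: "simple_path G xs"
    and ij: "i < length xs" "j < length xs" and a: "adj G (xs!i) (xs!j)"
  shows "j = Suc i \<or> i = Suc j \<or> (i = 0 \<and> j = length xs - 1) \<or> (j = 0 \<and> i = length xs - 1)"
proof -
  have interior: "j' = Suc i' \<or> i' = Suc j'"
    if "0 < i'" "Suc i' < length xs" "j' < length xs" "adj G (xs!i') (xs!j')" for i' j'
  proof -
    have "xs!j' = xs!(i'-1) \<or> xs!j' = xs!Suc i'"
      using degree_le_2_simple_path_nbr[OF wf m xs] that by blast
    hence "j' = i' - 1 \<or> j' = Suc i'"
      using xs that by (auto simp: simple_path_def nth_eq_iff_index_eq)
    thus ?thesis using that by auto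
  qed
  have "i \<noteq> j" using a wf_adjD[OF wf] by auto
  thus ?thesis using interior[of i j] interior[of j i] ij a adj_sym by fastforce
qed

lemma connected_longest_simple_path_verts:
  assumes wf: "wf_graph G" and c: "connected_graph G" and m: "degree_le_2 G"
    and xs: "simple_path G xs" and mx: "\<And>ys. simple_path G ys \<Longrightarrow> length ys \<le> length xs"
  shows "verts G = set xs"
proof
  show "set xs \<subseteq> verts G" using xs simple_path_def by blast
  have closed: "z \<in> set xs" if y: "y \<in> set xs" and yz: "adj G y z" for y z
  proof -
    obtain i where i: "i < length xs" "y = xs!i" using y by (metis in_set_conv_nth)
    consider "i = 0" | "i = length xs - 1" | "0 < i" "Suc i < length xs" using i by linarith
    thus ?thesis
    proof cases
      case 1 thus ?thesis using longest_simple_path_hd_nbr[OF wf xs mx] i yz by simp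
    next
      case 2 thus ?thesis using longest_simple_path_last_nbr[OF wf xs mx] i yz by simp
    next
      case 3
      hence "z = xs!(i-1) \<or> z = xs!Suc i" using degree_le_2_simple_path_nbr[OF wf m xs] i yz by blast
      thus ?thesis using 3 by auto
    qed
  qed
  have x0: "xs ! 0 \<in> set xs" using xs simple_path_def by auto
  hence "xs ! 0 \<in> verts G" using xs simple_path_def by blast
  from connected_closed_set[OF c this x0] closed show "verts G \<subseteq> set xs" by blast
qed

lemma simple_path_edgeE:
  assumes wf: "wf_graph G" and V: "verts G = set xs" and e: "e \<in> edges G"
  obtains i j where "i < length xs" "j < length xs" "e = {xs!i, xs!j}" "adj G (xs!i) (xs!j)"
proof -
  obtain x y where xy: "e = {x,y}" "adj G x y" using wf_edgeE[OF wf e] by metis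
  hence "x \<in> set xs" "y \<in> set xs" using wf_adjD[OF wf xy(2)] V by auto
  thus ?thesis using that xy by (metis in_set_conv_nth)
qed

lemma is_cycle_graphI:
  assumes wf: "wf_graph G" and m: "degree_le_2 G" and xs: "simple_path G xs" and V: "verts G = set xs"
    and n: "3 \<le> length xs" and closing: "adj G (xs!0) (xs!(length xs - 1))"
  shows "is_cycle_graph G"
proof -
  let ?n = "length xs"
  have "?n - 1 + 1 = ?n" using n by simp
  hence "(?n - 1 + 1) mod ?n = 0" by simp
  hence last: "{xs!(?n - 1), xs!((?n - 1 + 1) mod ?n)} = {xs!0, xs!(?n - 1)}"
    by (simp add: insert_commute)
  have "edges G = {{xs ! i, xs ! ((i + 1) mod ?n)} | i. i < ?n}"
  proof (intro equalityI subsetI)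
    fix e assume "e \<in> edges G"
    then obtain i j where ij: "i < ?n" "j < ?n" "e = {xs!i, xs!j}" "adj G (xs!i) (xs!j)"
      using simple_path_edgeE[OF wf V] by metis
    from degree_le_2_simple_path_adj[OF wf m xs ij(1,2,4)]
    consider "j = Suc i" | "i = Suc j" | "{i,j} = {0, ?n - 1}" by auto
    thus "e \<in> {{xs ! i, xs ! ((i + 1) mod ?n)} | i. i < ?n}"
    proof cases
      case 1 thus ?thesis using ij by (intro CollectI exI[of _ i]) simp
    next
      case 2 thus ?thesis using ij by (intro CollectI exI[of _ j]) (simp add: insert_commute)
    next
      case 3
      hence "e = {xs!0, xs!(?n - 1)}" using ij(3) by (auto simp: doubleton_eq_iff)
      thus ?thesis using n last by (intro CollectI exI[of _ "?n - 1"]) simp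
    qed
  next
    fix e assume "e \<in> {{xs ! i, xs ! ((i + 1) mod ?n)} | i. i < ?n}"
    then obtain i where i: "i < ?n" "e = {xs ! i, xs ! ((i + 1) mod ?n)}" by blast
    show "e \<in> edges G"
    proof (cases "Suc i < ?n")
      case True thus ?thesis using xs i unfolding simple_path_def by (simp add: adj_def)
    next
      case False
      hence "i = ?n - 1" using i by simp
      thus ?thesis using i last closing by (simp add: adj_def)
    qed
  qed
  moreover have "distinct xs" using xs simple_path_def by blast
  ultimately show ?thesis unfolding is_cycle_graph_def using V n by blast
qed

lemma is_path_graphI:
  assumes wf: "wf_graph G" and m: "degree_le_2 G" and xs: "simple_path G xs" and V: "verts G = set xs"
    and open_end: "length xs < 3 \<or> \<not> adj G (xs!0) (xs!(length xs - 1))"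
  shows "is_path_graph G"
proof -
  let ?n = "length xs"
  have "edges G = {{xs ! i, xs ! (i + 1)} | i. i + 1 < ?n}"
  proof (intro equalityI subsetI)
    fix e assume "e \<in> edges G"
    then obtain i j where ij: "i < ?n" "j < ?n" "e = {xs!i, xs!j}" "adj G (xs!i) (xs!j)"
      using simple_path_edgeE[OF wf V] by metis
    have "i \<noteq> j" using ij(4) wf_adjD[OF wf] by auto
    moreover have "adj G (xs!0) (xs!(?n - 1))" if "{i,j} = {0, ?n - 1}"
      using that ij(4) adj_sym[of G "xs!0"] by (auto simp: doubleton_eq_iff)
    ultimately have "j = Suc i \<or> i = Suc j"
      using degree_le_2_simple_path_adj[OF wf m xs ij(1,2,4)] open_end ij(1,2) by auto
    thus "e \<in> {{xs ! i, xs ! (i + 1)} | i. i + 1 < ?n}"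
      using ij by (auto simp: insert_commute)
  qed (use xs in \<open>auto simp: simple_path_def adj_def\<close>)
  moreover have "distinct xs" "xs \<noteq> []" using xs simple_path_def by blast+
  ultimately show ?thesis unfolding is_path_graph_def using V by blast
qed

lemma connected_degree_le_2_path_or_cycle:
  assumes wf: "wf_graph G" and c: "connected_graph G" and m: "degree_le_2 G"
    and v: "v \<in> verts G"
  shows "is_path_graph G \<or> is_cycle_graph G"
proof -
  obtain xs where xs: "simple_path G xs" and mx: "\<And>ys. simple_path G ys \<Longrightarrow> length ys \<le> length xs"
    using longest_simple_pathE[OF wf v] by blast
  have V: "verts G = set xs" using connected_longest_simple_path_verts[OF wf c m xs mx] .
  show ?thesis using is_path_graphI[OF wf m xs V] is_cycle_graphI[OF wf m xs V] by fastforce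
qed

lemma card_subset_doubleton: "S \<subseteq> {p,q} \<Longrightarrow> card S \<le> 2"
  by (metis card_2_iff card_insert_le card_mono card_1_singleton_iff finite.emptyI
      finite_insert insert_absorb2 le_trans one_le_numeral order_refl)

lemma is_path_graph_degree_le_2:
  assumes wf: "wf_graph G" and p: "is_path_graph G"
  shows "degree_le_2 G"
  unfolding degree_le_2_def
proof
  fix v
  obtain xs where xs: "distinct xs" "verts G = set xs"
    "edges G = {{xs ! i, xs ! (i + 1)} | i. i + 1 < length xs}"
    using p unfolding is_path_graph_def by blast
  have "nbrs G v \<subseteq> {xs!(k-1), xs!(k+1)}" if k: "k < length xs" "xs!k = v" for k
  proof
    fix u assume "u \<in> nbrs G v"
    then obtain i where i: "i + 1 < length xs" "{v,u} = {xs ! i, xs ! (i + 1)}"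
      using xs(3) by (auto simp: nbrs_def adj_def)
    hence "(v = xs!i \<and> u = xs!(i+1)) \<or> (v = xs!(i+1) \<and> u = xs!i)" by (auto simp: doubleton_eq_iff)
    moreover have "xs!i = v \<longleftrightarrow> i = k" "xs!(i+1) = v \<longleftrightarrow> i + 1 = k"
      using k xs(1) i(1) nth_eq_iff_index_eq by fastforce+
    ultimately show "u \<in> {xs!(k-1), xs!(k+1)}" by auto
  qed
  moreover have "nbrs G v = {}" if "v \<notin> set xs"
    using nbrs_not_vert[OF wf] that xs(2) by simp
  ultimately show "card (nbrs G v) \<le> 2"
    using card_subset_doubleton by (metis card.empty in_set_conv_nth zero_le)
qed

lemma Suc_mod_eqD:
  assumes "k < n" "i < n" "Suc i mod n = k"
  shows "i = (k + n - 1) mod n"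
proof (cases "Suc i < n")
  case True
  hence "k + n - 1 = i + n" using assms(3) by simp
  thus ?thesis using assms(2) by simp
next
  case False
  hence "Suc i = n" using assms(2) by simp
  moreover from this have "k = 0" using assms(3) by simp
  ultimately show ?thesis by simp
qed

lemma is_cycle_graph_degree_le_2:
  assumes wf: "wf_graph G" and p: "is_cycle_graph G"
  shows "degree_le_2 G"
  unfolding degree_le_2_def
proof
  fix v
  obtain xs where xs: "distinct xs" "verts G = set xs"
    "edges G = {{xs ! i, xs ! ((i + 1) mod length xs)} | i. i < length xs}"
    using p unfolding is_cycle_graph_def by blast
  let ?n = "length xs"
  have "nbrs G v \<subseteq> {xs!((k + ?n - 1) mod ?n), xs!((k + 1) mod ?n)}"
    if k: "k < ?n" "xs!k = v" for k
  proof
    fix u assume "u \<in> nbrs G v"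
    then obtain i where i: "i < ?n" "{v,u} = {xs ! i, xs ! ((i + 1) mod ?n)}"
      using xs(3) by (auto simp: nbrs_def adj_def)
    hence "(v = xs!i \<and> u = xs!((i+1) mod ?n)) \<or> (v = xs!((i+1) mod ?n) \<and> u = xs!i)"
      by (auto simp: doubleton_eq_iff)
    moreover have "(i+1) mod ?n < ?n" using i(1) by (metis mod_less_divisor less_nat_zero_code neq0_conv)
    hence "xs!i = v \<longleftrightarrow> i = k" "xs!((i+1) mod ?n) = v \<longleftrightarrow> Suc i mod ?n = k"
      using nth_eq_iff_index_eq[OF xs(1) _ k(1)] i(1) k(2) by auto
    ultimately show "u \<in> {xs!((k + ?n - 1) mod ?n), xs!((k + 1) mod ?n)}"
    proof (elim disjE conjE)
      assume "v = xs!((i+1) mod ?n)" "u = xs!i"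
      thus ?thesis using Suc_mod_eqD[OF k(1) i(1)] \<open>xs!((i+1) mod ?n) = v \<longleftrightarrow> Suc i mod ?n = k\<close>
        by simp
    qed simp
  qed
  moreover have "nbrs G v = {}" if "v \<notin> set xs"
    using nbrs_not_vert[OF wf] that xs(2) by simp
  ultimately show "card (nbrs G v) \<le> 2"
    using card_subset_doubleton by (metis card.empty in_set_conv_nth zero_le)
qed

lemma is_K13_edge_degree_le_4:
  assumes k: "is_K13 G"
  shows "edge_degree_le_4 G"
proof -
  obtain c a b d where cabd: "distinct [c, a, b, d]" "edges G = {{c, a}, {c, b}, {c, d}}"
    using k unfolding is_K13_def by (elim exE conjE) (rule that)
  have adj: "adj G x y \<longleftrightarrow> {x,y} \<in> {{c, a}, {c, b}, {c, d}}" for x y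
    using cabd(2) by (simp add: adj_def)
  have dd: "c \<noteq> a" "c \<noteq> b" "c \<noteq> d" "a \<noteq> b" "a \<noteq> d" "b \<noteq> d" using cabd(1) by auto
  have "nbrs G c = {a,b,d}" "nbrs G a = {c}" "nbrs G b = {c}" "nbrs G d = {c}"
    unfolding nbrs_def adj using dd by (auto simp: doubleton_eq_iff)
  hence deg: "card (nbrs G c) = 3" "card (nbrs G a) = 1" "card (nbrs G b) = 1" "card (nbrs G d) = 1"
    using dd by auto
  show ?thesis unfolding edge_degree_le_4_def
  proof (intro allI impI)
    fix x y assume "adj G x y"
    hence "(x = c \<and> y \<in> {a,b,d}) \<or> (y = c \<and> x \<in> {a,b,d})"
      unfolding adj by (auto simp: doubleton_eq_iff)
    thus "card (nbrs G x) + card (nbrs G y) \<le> 4" using deg by auto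
  qed
qed

lemma is_K13I:
  assumes wf: "wf_graph G" and c: "connected_graph G"
    and v: "nbrs G v = {a,b,p}" "distinct [a,b,p]"
    and leaf: "\<And>y x. y \<in> {a,b,p} \<Longrightarrow> adj G y x \<Longrightarrow> x = v"
  shows "is_K13 G"
proof -
  have av: "adj G v a" "adj G v b" "adj G v p" using v(1) by (auto simp: nbrs_def)
  have "v \<notin> {a,b,p}" using av wf_adjD[OF wf] by auto
  hence d: "distinct [v,a,b,p]" using v(2) by simp
  have "z \<in> {v,a,b,p}" if "y \<in> {v,a,b,p}" "adj G y z" for y z
    using that v(1) leaf by (auto simp: nbrs_def)
  hence "verts G \<subseteq> {v,a,b,p}" using connected_closed_set[OF c wf_adjD(2)[OF wf av(1)]] by blast
  moreover have V': "{v,a,b,p} \<subseteq> verts G" using av wf_adjD[OF wf] by auto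
  ultimately have V: "verts G = {v,a,b,p}" by blast
  have "edges G = {{v,a},{v,b},{v,p}}"
  proof (intro equalityI subsetI)
    fix e assume "e \<in> edges G"
    then obtain x y where xy: "e = {x,y}" "adj G x y" "x \<noteq> y" using wf_edgeE[OF wf] by metis
    have "x \<in> {v,a,b,p}" "y \<in> {v,a,b,p}" using V wf_adjD[OF wf xy(2)] by auto
    moreover have "x \<in> {a,b,p} \<Longrightarrow> y = v" using leaf xy(2) by blast
    moreover have "y \<in> {a,b,p} \<Longrightarrow> x = v" using leaf[of y x] xy(2) adj_sym[of G x y] by simp
    ultimately have "x = v \<and> y \<in> {a,b,p} \<or> y = v \<and> x \<in> {a,b,p}" using xy(3) by blast
    thus "e \<in> {{v,a},{v,b},{v,p}}" using xy(1) by (auto simp: insert_commute)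
  qed (use av in \<open>auto simp: adj_def\<close>)
  thus ?thesis unfolding is_K13_def using d V by blast
qed

section \<open>Bounded and unbounded iterations\<close>

lemma isolated_edge_verts:
  assumes wf: "wf_graph G" and c: "connected_graph G" and ab: "adj G a b"
    and na: "\<And>w. adj G a w \<Longrightarrow> w = b" and nb: "\<And>w. adj G b w \<Longrightarrow> w = a"
  shows "verts G \<subseteq> {a,b}"
  using connected_closed_set[OF c wf_adjD(2)[OF wf ab], of "{a,b}"] na nb by blast

lemma no_isolated_edgeI:
  assumes wf: "wf_graph G" and c: "connected_graph G"
    and p: "adj G p q" "adj G p r" "q \<noteq> r"
  shows "no_isolated_edge G"
  unfolding no_isolated_edge_def
proof (intro allI impI)
  fix a b assume ab: "adj G a b"
  show "(\<exists>w. w \<noteq> b \<and> adj G a w) \<or> (\<exists>w. w \<noteq> a \<and> adj G b w)"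
  proof (rule ccontr)
    assume "\<not> ?thesis"
    hence "verts G \<subseteq> {a,b}" using isolated_edge_verts[OF wf c ab] by blast
    moreover have "p \<in> verts G" "q \<in> verts G" "r \<in> verts G" "p \<noteq> q" "p \<noteq> r"
      using p wf_adjD[OF wf] by auto
    ultimately show False using p(3) by auto
  qed
qed

lemma connected_not_no_isolated_edgeE:
  assumes wf: "wf_graph G" and c: "connected_graph G" and n: "\<not> no_isolated_edge G"
  obtains a b where "verts G \<subseteq> {a,b}"
proof -
  obtain a b where "adj G a b" "\<forall>w. adj G a w \<longrightarrow> w = b" "\<forall>w. adj G b w \<longrightarrow> w = a"
    using n unfolding no_isolated_edge_def by blast
  thus ?thesis using isolated_edge_verts[OF wf c] that by blast
qed

definition has_triangle :: "ugraph \<Rightarrow> bool" where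
  "has_triangle G \<longleftrightarrow> (\<exists>a b c. adj G a b \<and> adj G b c \<and> adj G a c)"

lemma has_triangle_line_graphI:
  assumes wf: "wf_graph G" and e: "e1 \<in> edges G" "e2 \<in> edges G" "e3 \<in> edges G"
    and d: "distinct [e1,e2,e3]" and m: "e1 \<inter> e2 \<noteq> {}" "e2 \<inter> e3 \<noteq> {}" "e1 \<inter> e3 \<noteq> {}"
  shows "has_triangle (line_graph G)"
  using adj_line_graph[OF wf] e d m unfolding has_triangle_def by (metis distinct_length_2_or_more)

lemma has_triangle_line_graph:
  assumes wf: "wf_graph G" and t: "has_triangle G"
  shows "has_triangle (line_graph G)"
proof -
  obtain a b c where abc: "adj G a b" "adj G b c" "adj G a c" using t has_triangle_def by blast
  hence "a \<noteq> b" "b \<noteq> c" "a \<noteq> c" using wf_adjD[OF wf] by auto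
  thus ?thesis using has_triangle_line_graphI[OF wf, of "{a,b}" "{b,c}" "{a,c}"] abc
    by (auto simp: adj_def doubleton_eq_iff)
qed

lemma has_triangle_line_graph_of_claw:
  assumes wf: "wf_graph G" and v: "adj G v a" "adj G v b" "adj G v c" "distinct [a,b,c]"
  shows "has_triangle (line_graph G)"
proof -
  have "v \<notin> {a,b,c}" using v wf_adjD[OF wf] by auto
  thus ?thesis using has_triangle_line_graphI[OF wf, of "{v,a}" "{v,b}" "{v,c}"] v
    by (auto simp: adj_def doubleton_eq_iff)
qed

lemma has_triangle_no_isolated_edge:
  assumes wf: "wf_graph G" and c: "connected_graph G" and t: "has_triangle G"
  shows "no_isolated_edge G"
proof -
  obtain x y z where xyz: "adj G x y" "adj G y z" "adj G x z" using t has_triangle_def by blast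
  hence "y \<noteq> z" using wf_adjD[OF wf] by blast
  thus ?thesis using no_isolated_edgeI[OF wf c xyz(1,3)] by blast
qed

lemma KBe_iter_burgeon_isomorphic:
  assumes wf: "wf_graph G" and n: "\<forall>j<k. no_isolated_edge ((line_graph ^^ j) G)"
  shows "isomorphic ((KBe ^^ k) (burgeon G)) (burgeon ((line_graph ^^ k) G))"
  using n
proof (induction k)
  case (Suc k)
  let ?H = "(KBe ^^ k) (burgeon G)" and ?L = "(line_graph ^^ k) G"
  have "isomorphic (KBe ?H) (KBe (burgeon ?L))"
    using Suc KBe_isomorphic wf_KBe_iter wf_burgeon wf_line_graph_iter wf by simp
  moreover have "isomorphic (KBe (burgeon ?L)) (burgeon (line_graph ?L))"
    using KBe_burgeon_isomorphic[OF wf_line_graph_iter[OF wf]] Suc.prems by simp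
  ultimately show ?case using isomorphic_trans by simp
qed (simp add: isomorphic_refl)

lemma card_edges_le_1_biclique:
  assumes e: "card (edges H) \<le> 1" "finite (edges H)" and S: "biclique H S"
  shows "S \<in> edges H"
proof -
  have "induced_cbip H S" using S biclique_def by blast
  then obtain A B where AB: "A \<noteq> {}" "B \<noteq> {}" "A \<union> B = S" "\<forall>a\<in>A. \<forall>b\<in>B. adj H a b"
    unfolding induced_cbip_def by blast
  obtain a b where ab: "a \<in> A" "b \<in> B" using AB by blast
  have single: "f = g" if "f \<in> edges H" "g \<in> edges H" for f g
    using that e card_le_Suc0_iff_eq[OF e(2)] by (simp add: One_nat_def)
  have all: "{a',b'} = {a,b}" if "a' \<in> A" "b' \<in> B" for a' b'
    using single AB(4) ab that by (simp add: adj_def)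
  have "S \<subseteq> {a,b}"
  proof
    fix x assume "x \<in> S"
    hence "x \<in> A \<or> x \<in> B" using AB(3) by blast
    thus "x \<in> {a,b}" using all[of x b] all[of a x] ab by blast
  qed
  moreover have "{a,b} \<subseteq> S" using ab AB(3) by blast
  ultimately have "S = {a,b}" by blast
  thus ?thesis using AB(4) ab by (simp add: adj_def)
qed

lemma card_verts_KBe_le_1:
  assumes wf: "wf_graph H" and e: "card (edges H) \<le> 1"
  shows "card (verts (KBe H)) \<le> 1"
proof -
  have "{S. biclique H S} \<subseteq> edges H"
    using card_edges_le_1_biclique[OF e finite_edges[OF wf]] by blast
  hence "card {S. biclique H S} \<le> 1" using e finite_edges[OF wf] card_mono le_trans by metis
  thus ?thesis unfolding verts_KBe using card_image_le[OF finite_bicliques[OF wf]] le_trans by blast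
qed

lemma card_edges_burgeon_le_1:
  assumes wf: "wf_graph H" and V: "verts H \<subseteq> {a,b}"
  shows "card (edges (burgeon H)) \<le> 1"
proof -
  have "edges (burgeon H) \<subseteq> {{prod_encode (a,b), prod_encode (b,a)}}"
  proof
    fix e assume "e \<in> edges (burgeon H)"
    then consider (clique) v u w where "e = {prod_encode (v, u), prod_encode (v, w)}"
        "adj H v u" "adj H v w" "u \<noteq> w"
      | (edge) v u where "e = {prod_encode (v, u), prod_encode (u, v)}" "adj H v u"
      unfolding edges_burgeon by blast
    thus "e \<in> {{prod_encode (a,b), prod_encode (b,a)}}"
    proof cases
      case clique
      thus ?thesis using V wf_adjD[OF wf clique(2)] wf_adjD[OF wf clique(3)] by auto
    next
      case edge
      thus ?thesis using V wf_adjD[OF wf edge(2)] by (auto simp: insert_commute)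
    qed
  qed
  hence "card (edges (burgeon H)) \<le> card {{prod_encode (a,b), prod_encode (b,a)}}"
    by (intro card_mono) simp_all
  thus ?thesis by simp
qed

lemma card_verts_le_1_KBe_iter:
  assumes wf: "wf_graph H" and c: "card (verts H) \<le> 1"
  shows "card (verts ((KBe ^^ k) H)) \<le> 1"
proof (induction k)
  case (Suc k)
  have "wf_graph ((KBe ^^ k) H)" using wf_KBe_iter[OF wf] .
  moreover from this have "edges ((KBe ^^ k) H) = {}"
    using Suc wf_adjD wf_edgeE wf_finite by (metis card_le_Suc0_iff_eq One_nat_def ex_in_conv)
  ultimately show ?case using card_verts_KBe_le_1 by simp
qed (use c in simp_all)

text \<open>Once an iterated line graph has an isolated edge, it is K_2 and the iteration collapses.\<close>
lemma KBe_iter_burgeon_cases: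
  assumes wf: "wf_graph G" and c: "connected_graph G"
  shows "isomorphic ((KBe ^^ k) (burgeon G)) (burgeon ((line_graph ^^ k) G)) \<or>
    card (verts ((KBe ^^ k) (burgeon G))) \<le> 1"
proof (cases "\<forall>j<k. no_isolated_edge ((line_graph ^^ j) G)")
  case True thus ?thesis using KBe_iter_burgeon_isomorphic[OF wf] by blast
next
  case False
  define j where "j = (LEAST j. \<not> no_isolated_edge ((line_graph ^^ j) G))"
  have j: "j < k" "\<not> no_isolated_edge ((line_graph ^^ j) G)"
    using False LeastI_ex[of "\<lambda>j. \<not> no_isolated_edge ((line_graph ^^ j) G)"] Least_le
    unfolding j_def by (metis le_less_trans not_less)+
  hence "\<forall>i<j. no_isolated_edge ((line_graph ^^ i) G)" using not_less_Least j_def by blast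
  hence i: "isomorphic (KBe ((KBe ^^ j) (burgeon G))) (KBe (burgeon ((line_graph ^^ j) G)))"
    using KBe_iter_burgeon_isomorphic KBe_isomorphic wf_KBe_iter wf_burgeon wf_line_graph_iter wf
    by simp
  obtain a b where "verts ((line_graph ^^ j) G) \<subseteq> {a,b}"
    using connected_not_no_isolated_edgeE[OF wf_line_graph_iter connected_line_graph_iter] wf c j(2)
    by metis
  hence "card (verts ((KBe ^^ Suc j) (burgeon G))) \<le> 1"
    using card_verts_KBe_le_1 card_edges_burgeon_le_1 wf_burgeon wf_line_graph_iter[OF wf]
      isomorphic_card_verts[OF i] by simp
  hence "card (verts ((KBe ^^ (k - Suc j)) ((KBe ^^ Suc j) (burgeon G)))) \<le> 1"
    using card_verts_le_1_KBe_iter wf_KBe_iter wf_burgeon wf by blast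
  moreover have "k - Suc j + Suc j = k" using j(1) by simp
  ultimately show ?thesis by (metis funpow_add o_apply)
qed

lemma not_diverges_if_bounded:
  assumes "\<And>k. card (verts ((KBe ^^ k) H)) \<le> C"
  shows "\<not> diverges H"
proof
  assume "diverges H"
  hence "eventually (\<lambda>k. C + 1 \<le> card (verts ((KBe ^^ k) H))) sequentially"
    unfolding diverges_def filterlim_at_top by blast
  then obtain k where "C + 1 \<le> card (verts ((KBe ^^ k) H))"
    using eventually_sequentially by auto
  thus False using assms[of k] by simp
qed

lemma diverges_if_linear:
  assumes "\<And>k. k \<le> card (verts ((KBe ^^ (k + m)) H))"
  shows "diverges H"
  unfolding diverges_def filterlim_at_top eventually_sequentially
proof (intro allI exI impI)
  fix Z n :: nat assume "Z + m \<le> n"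
  thus "Z \<le> card (verts ((KBe ^^ n) H))" using assms[of "n - m"] by simp
qed

lemma not_diverges_burgeon:
  assumes wf: "wf_graph G" and c: "connected_graph G" and e: "edge_degree_le_4 G"
  shows "\<not> diverges (burgeon G)"
proof (rule not_diverges_if_bounded)
  fix k
  let ?C = "max 1 (max (card (darts G)) (card (darts (line_graph G))))"
  have "card (verts (burgeon ((line_graph ^^ k) G))) \<le> ?C"
    using card_verts_burgeon[OF wf_line_graph_iter[OF wf]] card_darts_line_graph_iter_le[OF wf e]
    by (simp add: le_max_iff_disj)
  thus "card (verts ((KBe ^^ k) (burgeon G))) \<le> ?C"
    using KBe_iter_burgeon_cases[OF wf c, of k] isomorphic_card_verts by fastforce
qed

definition paw :: "nat \<Rightarrow> nat \<Rightarrow> nat \<Rightarrow> nat \<Rightarrow> ugraph" where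
  "paw z a b c = ({z,a,b,c}, {{z,a},{z,b},{z,c},{a,b}})"

lemma edges_paw: "edges (paw z a b c) = {{z,a},{z,b},{z,c},{a,b}}"
  by (simp add: paw_def edges_def)

lemma wf_paw: "distinct [z,a,b,c] \<Longrightarrow> wf_graph (paw z a b c)"
  unfolding wf_graph_def paw_def verts_def edges_def by auto

lemma edge_leafless_branching_paw:
  assumes d: "distinct [z,a,b,c]"
  shows "edge_leafless_branching (paw z a b c)"
proof -
  have adj: "adj (paw z a b c) x y \<longleftrightarrow> {x,y} \<in> {{z,a},{z,b},{z,c},{a,b}}" for x y
    by (simp add: adj_def edges_paw)
  have "nbrs (paw z a b c) z = {a,b,c}" "nbrs (paw z a b c) a = {z,b}"
    "nbrs (paw z a b c) b = {z,a}" "nbrs (paw z a b c) c = {z}"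
    using d unfolding nbrs_def adj by (auto simp: doubleton_eq_iff)
  hence deg: "card (nbrs (paw z a b c) z) = 3" "card (nbrs (paw z a b c) a) = 2"
    "card (nbrs (paw z a b c) b) = 2" "card (nbrs (paw z a b c) c) = 1" using d by auto
  have "4 \<le> card (nbrs (paw z a b c) x) + card (nbrs (paw z a b c) y)"
    if "adj (paw z a b c) x y" for x y
  proof -
    have "(x = z \<and> y \<in> {a,b,c}) \<or> (y = z \<and> x \<in> {a,b,c}) \<or> (x = a \<and> y = b) \<or> (x = b \<and> y = a)"
      using that unfolding adj by (auto simp: doubleton_eq_iff)
    thus ?thesis using deg by auto
  qed
  moreover have "adj (paw z a b c) z a" unfolding adj by simp
  ultimately show ?thesis unfolding edge_leafless_branching_def using deg by fastforce
qed

lemma paw_in_line_graph: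
  assumes wf: "wf_graph G" and e: "e0 \<in> edges G" "e1 \<in> edges G" "e2 \<in> edges G" "e3 \<in> edges G"
    and d: "distinct [e0,e1,e2,e3]"
    and m: "e0 \<inter> e1 \<noteq> {}" "e0 \<inter> e2 \<noteq> {}" "e0 \<inter> e3 \<noteq> {}" "e1 \<inter> e2 \<noteq> {}"
  shows "distinct [set_encode e0, set_encode e1, set_encode e2, set_encode e3]"
    and "edges (paw (set_encode e0) (set_encode e1) (set_encode e2) (set_encode e3))
      \<subseteq> edges (line_graph G)"
proof -
  show "distinct [set_encode e0, set_encode e1, set_encode e2, set_encode e3]"
    using d e finite_edge[OF wf] by (simp add: set_encode_eq)
  show "edges (paw (set_encode e0) (set_encode e1) (set_encode e2) (set_encode e3))
      \<subseteq> edges (line_graph G)"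
    unfolding edges_paw edges_line_graph using e d m by fastforce
qed

lemma paw_in_line_graph_of_star:
  assumes wf: "wf_graph G" and v: "adj G v a" "adj G v b" "adj G v p" "adj G v d"
    and d: "distinct [a,b,p,d]"
  shows "\<exists>z a b c. distinct [z,a,b,c] \<and> edges (paw z a b c) \<subseteq> edges (line_graph G)"
proof -
  have "v \<notin> {a,b,p,d}" using v wf_adjD[OF wf] by auto
  hence "distinct [{v,a},{v,b},{v,p},{v,d}]" using d by (auto simp: doubleton_eq_iff)
  moreover have "{v,a} \<in> edges G" "{v,b} \<in> edges G" "{v,p} \<in> edges G" "{v,d} \<in> edges G"
    using v by (simp_all add: adj_def)
  ultimately show ?thesis using paw_in_line_graph[OF wf] by blast
qed

lemma paw_in_line_graph_of_claw_extension:
  assumes wf: "wf_graph G" and v: "adj G v y" "adj G v q" "adj G v r" "distinct [y,q,r]"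
    and x: "adj G y x" "x \<noteq> v"
  shows "\<exists>z a b c. distinct [z,a,b,c] \<and> edges (paw z a b c) \<subseteq> edges (line_graph G)"
proof -
  have "v \<notin> {y,q,r}" using v wf_adjD[OF wf] by auto
  hence "distinct [{v,y},{v,q},{v,r},{y,x}]" using v(4) x(2) by (auto simp: doubleton_eq_iff)
  moreover have "{v,y} \<in> edges G" "{v,q} \<in> edges G" "{v,r} \<in> edges G" "{y,x} \<in> edges G"
    using v x by (simp_all add: adj_def)
  ultimately show ?thesis using paw_in_line_graph[OF wf] by blast
qed

lemma exists_paw_in_line_graph:
  assumes wf: "wf_graph G" and c: "connected_graph G" and k: "\<not> is_K13 G"
    and v: "3 \<le> card (nbrs G v)"
  shows "\<exists>z a b c. distinct [z,a,b,c] \<and> edges (paw z a b c) \<subseteq> edges (line_graph G)"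
proof -
  obtain a b p where av: "adj G v a" "adj G v b" "adj G v p" and dabp: "distinct [a,b,p]"
    using card_nbrs_ge_3E[OF v] by blast
  show ?thesis
  proof (cases "\<exists>d. adj G v d \<and> d \<notin> {a,b,p}")
    case True
    then obtain d where "adj G v d" "d \<notin> {a,b,p}" by blast
    thus ?thesis using paw_in_line_graph_of_star[OF wf av] dabp by simp
  next
    case False
    hence nv: "nbrs G v = {a,b,p}" using av by (auto simp: nbrs_def)
    show ?thesis
    proof (cases "\<exists>y x. y \<in> {a,b,p} \<and> adj G y x \<and> x \<noteq> v")
      case True
      then obtain y x where yx: "y \<in> {a,b,p}" "adj G y x" "x \<noteq> v" by blast
      then consider "y = a" | "y = b" | "y = p" by blast
      thus ?thesis
      proof cases
        case 1 thus ?thesis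
          using paw_in_line_graph_of_claw_extension[OF wf av _ yx(2,3)[unfolded 1]] dabp by simp
      next
        case 2 thus ?thesis
          using paw_in_line_graph_of_claw_extension[OF wf av(2,1,3) _ yx(2,3)[unfolded 2]] dabp
          by auto
      next
        case 3 thus ?thesis
          using paw_in_line_graph_of_claw_extension[OF wf av(3,1,2) _ yx(2,3)[unfolded 3]] dabp
          by auto
      qed
    next
      case False
      hence "is_K13 G" using is_K13I[OF wf c nv dabp] by blast
      thus ?thesis using k by blast
    qed
  qed
qed

lemma diverges_burgeon:
  assumes wf: "wf_graph G" and c: "connected_graph G" and v: "3 \<le> card (nbrs G v)"
    and pw: "distinct [z,a,b,c]" "edges (paw z a b c) \<subseteq> edges (line_graph G)"
  shows "diverges (burgeon G)"
proof (rule diverges_if_linear)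
  obtain p q r where pqr: "adj G v p" "adj G v q" "adj G v r" "distinct [p,q,r]"
    using card_nbrs_ge_3E[OF v] by blast
  have "has_triangle ((line_graph ^^ Suc j) G)" for j
  proof (induction j)
    case 0 thus ?case using has_triangle_line_graph_of_claw[OF wf pqr] by simp
  next
    case (Suc j)
    thus ?case using has_triangle_line_graph[OF wf_line_graph_iter[OF wf, of "Suc j"]] by simp
  qed
  hence "no_isolated_edge ((line_graph ^^ j) G)" for j
    using no_isolated_edgeI[OF wf c pqr(1,2)] pqr(4)
      has_triangle_no_isolated_edge[OF wf_line_graph_iter[OF wf] connected_line_graph_iter[OF wf c]]
    by (cases j) (simp, metis)
  hence card_eq: "card (verts ((KBe ^^ j) (burgeon G))) = card (darts ((line_graph ^^ j) G))" for j
    using isomorphic_card_verts[OF KBe_iter_burgeon_isomorphic[OF wf, of j]]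
      card_verts_burgeon[OF wf_line_graph_iter[OF wf]] by simp
  fix k
  let ?H = "line_graph (paw z a b c)"
  have "edges ((line_graph ^^ k) ?H) \<subseteq> edges ((line_graph ^^ k) ((line_graph ^^ 2) G))"
    using line_graph_iter_mono[OF line_graph_mono[OF pw(2)]] by (simp add: numeral_2_eq_2)
  also have "(line_graph ^^ k) ((line_graph ^^ 2) G) = (line_graph ^^ (k + 2)) G"
    by (simp only: funpow_add o_apply)
  finally have "card (darts ((line_graph ^^ k) ?H)) \<le> card (darts ((line_graph ^^ (k + 2)) G))"
    using darts_mono finite_darts[OF wf_line_graph_iter[OF wf]] card_mono by metis
  moreover have "k \<le> card (darts ((line_graph ^^ k) ?H))"
    using card_darts_line_graph_iter_ge[OF wf_line_graph[OF wf_paw[OF pw(1)]]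
        leafless_branching_line_graph[OF wf_paw[OF pw(1)] edge_leafless_branching_paw[OF pw(1)]]]
    by (meson le_add2 le_trans)
  ultimately show "k \<le> card (verts ((KBe ^^ (k + 2)) (burgeon G)))" unfolding card_eq by linarith
qed

lemma exists_branch_vertex:
  assumes wf: "wf_graph G" and c: "connected_graph G" and e: "edges G \<noteq> {}"
    and n: "\<not> is_path_graph G" "\<not> is_cycle_graph G"
  shows "\<exists>v. 3 \<le> card (nbrs G v)"
proof -
  obtain x y where "adj G x y" using e wf_edgeE[OF wf] by blast
  hence "\<not> degree_le_2 G"
    using connected_degree_le_2_path_or_cycle[OF wf c] wf_adjD[OF wf] n by blast
  then obtain v where "\<not> card (nbrs G v) \<le> 2" unfolding degree_le_2_def by blast
  thus ?thesis by (intro exI[of _ v]) simp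
qed

theorem mainTheorem14:
  fixes G :: ugraph
  assumes "wf_graph G" and "connected_graph G" and "edges G \<noteq> {}"
  shows "diverges (burgeon G) \<longleftrightarrow>
           \<not> is_cycle_graph G \<and> \<not> is_path_graph G \<and> \<not> is_K13 G"
proof
  assume "diverges (burgeon G)"
  moreover have "edge_degree_le_4 G" if "is_cycle_graph G \<or> is_path_graph G \<or> is_K13 G"
    using that is_cycle_graph_degree_le_2[OF assms(1)] is_path_graph_degree_le_2[OF assms(1)]
      degree_le_2_imp_edge_degree_le_4 is_K13_edge_degree_le_4 by blast
  ultimately show "\<not> is_cycle_graph G \<and> \<not> is_path_graph G \<and> \<not> is_K13 G"
    using not_diverges_burgeon[OF assms(1,2)] by blast
next
  assume n: "\<not> is_cycle_graph G \<and> \<not> is_path_graph G \<and> \<not> is_K13 G"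
  then obtain v where v: "3 \<le> card (nbrs G v)" using exists_branch_vertex[OF assms] by blast
  then obtain z a b c where "distinct [z,a,b,c]" "edges (paw z a b c) \<subseteq> edges (line_graph G)"
    using exists_paw_in_line_graph[OF assms(1,2)] n by blast
  thus "diverges (burgeon G)" using diverges_burgeon[OF assms(1,2) v] by blast
qed

end
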